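(* Let $\pi$ be an irreducible admissible representation of $G$ with Whittaker model $\mathcal{W}(\pi,\psi)$, and let $W\in\mathcal{W}(\pi,\psi)^J$ with $W(1)=1$ be such that $W(zg)=W(g)$ for all $z\in\mathcal{Z}$, $g\in G$, and $$X_{s_i}(W)(g)=-W(g)\ (i=1,\dots,n-1),\qquad X_u(W)(g)=\epsilon W(g)$$ for all $g\in G$, where $\epsilon$ is an $n$-th root of unity. Then for all $(k_1,\dots,k_n)\in\mathbb{Z}^n$, with $d=\varpi^{(k_1,\dots,k_n)}$, $$W(d)=\begin{cases}\epsilon^{\sum_{i=1}^nk_i}(-1)^{(n-1)\sum_{i=1}^nk_i}\delta_B(d) & \text{if } d\in T^+,\\ 0&\text{otherwise.}\end{cases}$$
   Context: $F$ is a non-archimedean local field with ring of integers $\mathcal{O}$, maximal ideal $\mathfrak{p}=\varpi\mathcal{O}$. $G=GL_n(F)$, $\mathcal{Z}$ its center, $N$ upper triangular unipotent matrices, $K=GL_n(\mathcal{O})$, $J$ the Iwahori subgroup (elements of $K$ whose reduction mod $\mathfrak{p}$ is upper triangular). $\varpi^{(k_1,\dots,k_n)}=\mathrm{diag}(\varpi^{k_1},\dots,\varpi^{k_n})$ and $T^+=\{\varpi^{(k_1,\dots,k_n)}:k_1\ge\dots\ge k_n\}$. $\delta_B(\mathrm{diag}(t))=\prod|t_i|^{n+1-2i}$. $s_i$ is the permutation matrix of the transposition $(i,i+1)$ and $u=\begin{pmatrix}0&I_{n-1}\\ \varpi&0\end{pmatrix}$. For $g\in G$, $X_g$ is the characteristic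 function of $JgJ$ in the Iwahori Hecke algebra, acting on right $J$-invariant functions by $X_g(f)(x)=\sum_i f(x\gamma_i)$ where $JgJ=\bigsqcup_i\gamma_iJ$. $\psi$ is an unramified additive character of $F$ (trivial on $\mathcal{O}$, nontrivial on $\mathfrak{p}^{-1}$), extended to $N$ by $\psi(n)=\psi(\sum_i n_{i,i+1})$; $\mathcal{W}(\pi,\psi)$ consists of functions $W$ on $G$ with $W(ng)=\psi(n)W(g)$, $G$ acting by right translation, and the superscript $J$ denotes right $J$-invariant functions. *)

theory Defs
  imports Complex_Main "Jordan_Normal_Form.Determinant"
begin

text \<open>A field F (type 'a) with a normalized discrete valuation v (the value at 0 is
irrelevant and ignored; 0 is treated as having valuation +infinity).\<close>

definition pw :: "('a::field \<Rightarrow> int) \<Rightarrow> int \<Rightarrow> 'a set" where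
  "pw v m = {x. x = 0 \<or> v x \<ge> m}"

abbreviation intO :: "('a::field \<Rightarrow> int) \<Rightarrow> 'a set" where
  "intO v \<equiv> pw v 0"

definition residue_classes :: "('a::field \<Rightarrow> int) \<Rightarrow> 'a set set" where
  "residue_classes v = intO v // {(x, y). x \<in> intO v \<and> y \<in> intO v \<and> x - y \<in> pw v 1}"

definition resq :: "('a::field \<Rightarrow> int) \<Rightarrow> nat" where
  "resq v = card (residue_classes v)"

definition nonarch_local_field :: "('a::field \<Rightarrow> int) \<Rightarrow> bool" where
  "nonarch_local_field v \<longleftrightarrow>
     (\<forall>x y. x \<noteq> 0 \<and> y \<noteq> 0 \<longrightarrow> v (x * y) = v x + v y) \<and>
     (\<forall>x y. x \<noteq> 0 \<and> y \<noteq> 0 \<and> x + y \<noteq> 0 \<longrightarrow> v (x + y) \<ge> min (v x) (v y)) \<and>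
     (\<forall>k. \<exists>x. x \<noteq> 0 \<and> v x = k) \<and>
     finite (residue_classes v) \<and>
     (\<forall>s :: nat \<Rightarrow> 'a. (\<forall>m. \<exists>N. \<forall>i\<ge>N. \<forall>j\<ge>N. s i - s j \<in> pw v m) \<longrightarrow>
        (\<exists>L. \<forall>m. \<exists>N. \<forall>i\<ge>N. s i - L \<in> pw v m))"

definition absv :: "('a::field \<Rightarrow> int) \<Rightarrow> 'a \<Rightarrow> real" where
  "absv v x = (if x = 0 then 0 else real (resq v) powi (- v x))"

definition GL :: "nat \<Rightarrow> 'a::field mat set" where
  "GL n = {A \<in> carrier_mat n n. det A \<noteq> 0}"

definition centre :: "nat \<Rightarrow> 'a::field mat set" where
  "centre n = {c \<cdot>\<^sub>m (1\<^sub>m n) | c. c \<noteq> 0}"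

definition unipN :: "nat \<Rightarrow> 'a::field mat set" where
  "unipN n = {A \<in> carrier_mat n n. \<forall>i<n. \<forall>j<n.
      (j < i \<longrightarrow> A $$ (i, j) = 0) \<and> (i = j \<longrightarrow> A $$ (i, j) = 1)}"

definition iwahoriJ :: "nat \<Rightarrow> ('a::field \<Rightarrow> int) \<Rightarrow> 'a mat set" where
  "iwahoriJ n v = {A \<in> carrier_mat n n. det A \<noteq> 0 \<and> v (det A) = 0 \<and>
      (\<forall>i<n. \<forall>j<n. A $$ (i, j) \<in> intO v \<and> (j < i \<longrightarrow> A $$ (i, j) \<in> pw v 1))}"

text \<open>Principal congruence subgroups K_m = 1 + p^m M_n(O), m \<ge> 1 (a neighbourhood basis
of the identity consisting of compact open subgroups).\<close>
definition congK :: "nat \<Rightarrow> ('a::field \<Rightarrow> int) \<Rightarrow> int \<Rightarrow> 'a mat set" where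
  "congK n v m = {A \<in> GL n. \<forall>i<n. \<forall>j<n. A $$ (i, j) - (1\<^sub>m n) $$ (i, j) \<in> pw v m}"

definition diagpw :: "nat \<Rightarrow> 'a::field \<Rightarrow> (nat \<Rightarrow> int) \<Rightarrow> 'a mat" where
  "diagpw n pi0 k = mat n n (\<lambda>(a, b). if a = b then pi0 powi (k a) else 0)"

definition Tplus :: "nat \<Rightarrow> 'a::field \<Rightarrow> 'a mat set" where
  "Tplus n pi0 = {diagpw n pi0 k | k. \<forall>i. i + 1 < n \<longrightarrow> k i \<ge> k (i + 1)}"

text \<open>delta_B(diag(t)) = prod_i |t_i|^(n+1-2i), i = 1..n (here 0-indexed: exponent n-1-2i).\<close>
definition deltaB :: "nat \<Rightarrow> ('a::field \<Rightarrow> int) \<Rightarrow> 'a mat \<Rightarrow> real" where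
  "deltaB n v t = (\<Prod>i<n. absv v (t $$ (i, i)) powi (int n - 1 - 2 * int i))"

text \<open>s_i, i = 0..n-2, the permutation matrix of the transposition (i, i+1).\<close>
definition sperm :: "nat \<Rightarrow> nat \<Rightarrow> 'a::field mat" where
  "sperm n i = mat n n (\<lambda>(a, b).
      if b = (if a = i then i + 1 else if a = i + 1 then i else a) then 1 else 0)"

definition umat :: "nat \<Rightarrow> 'a::field \<Rightarrow> 'a mat" where
  "umat n pi0 = mat n n (\<lambda>(a, b). if b = a + 1 then 1 else if a = n - 1 \<and> b = 0 then pi0 else 0)"

definition double_coset :: "nat \<Rightarrow> ('a::field \<Rightarrow> int) \<Rightarrow> 'a mat \<Rightarrow> 'a mat set" where
  "double_coset n v g = {a * g * b | a b. a \<in> iwahoriJ n v \<and> b \<in> iwahoriJ n v}"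

definition left_cosets :: "nat \<Rightarrow> ('a::field \<Rightarrow> int) \<Rightarrow> 'a mat \<Rightarrow> 'a mat set set" where
  "left_cosets n v g = {{\<gamma> * b | b. b \<in> iwahoriJ n v} | \<gamma>. \<gamma> \<in> double_coset n v g}"

text \<open>X_g(f)(x) = sum_i f(x gamma_i) where J g J = disjoint union of gamma_i J.\<close>
definition hecke :: "nat \<Rightarrow> ('a::field \<Rightarrow> int) \<Rightarrow> 'a mat \<Rightarrow> ('a mat \<Rightarrow> complex) \<Rightarrow> 'a mat \<Rightarrow> complex" where
  "hecke n v g f x = (\<Sum>C\<in>left_cosets n v g. f (x * (SOME \<gamma>. \<gamma> \<in> C)))"

definition unram_char :: "('a::field \<Rightarrow> int) \<Rightarrow> ('a \<Rightarrow> complex) \<Rightarrow> bool" where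
  "unram_char v \<psi> \<longleftrightarrow> (\<forall>x y. \<psi> (x + y) = \<psi> x * \<psi> y) \<and>
     (\<forall>x\<in>intO v. \<psi> x = 1) \<and> (\<exists>x\<in>pw v (-1). \<psi> x \<noteq> 1)"

definition psiN :: "nat \<Rightarrow> ('a::field \<Rightarrow> complex) \<Rightarrow> 'a mat \<Rightarrow> complex" where
  "psiN n \<psi> A = \<psi> (\<Sum>i<n - 1. A $$ (i, i + 1))"

definition fin_dim :: "('b \<Rightarrow> complex) set \<Rightarrow> bool" where
  "fin_dim S \<longleftrightarrow> (\<exists>B. finite B \<and> B \<subseteq> S \<and> (\<forall>f\<in>S. \<exists>c. f = (\<lambda>x. \<Sum>b\<in>B. c b * b x)))"

definition fn_subspace :: "('b \<Rightarrow> complex) set \<Rightarrow> bool" where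
  "fn_subspace S \<longleftrightarrow> (\<lambda>_. 0) \<in> S \<and> (\<forall>f\<in>S. \<forall>g\<in>S. (\<lambda>x. f x + g x) \<in> S) \<and>
     (\<forall>c. \<forall>f\<in>S. (\<lambda>x. c * f x) \<in> S)"

definition rt_stable :: "nat \<Rightarrow> ('a::field mat \<Rightarrow> complex) set \<Rightarrow> bool" where
  "rt_stable n S \<longleftrightarrow> (\<forall>f\<in>S. \<forall>g\<in>GL n. (\<lambda>x. if x \<in> GL n then f (x * g) else 0) \<in> S)"

definition fixed_by :: "nat \<Rightarrow> 'a::field mat set \<Rightarrow> ('a mat \<Rightarrow> complex) \<Rightarrow> bool" where
  "fixed_by n H f \<longleftrightarrow> (\<forall>h\<in>H. \<forall>g\<in>GL n. f (g * h) = f g)"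

definition irred_adm_whittaker_model ::
  "nat \<Rightarrow> ('a::field \<Rightarrow> int) \<Rightarrow> ('a \<Rightarrow> complex) \<Rightarrow> ('a mat \<Rightarrow> complex) set \<Rightarrow> bool" where
  "irred_adm_whittaker_model n v \<psi> V \<longleftrightarrow>
     fn_subspace V \<and> rt_stable n V \<and>
     (\<forall>f\<in>V. \<forall>x. x \<notin> GL n \<longrightarrow> f x = 0) \<and>
     (\<forall>f\<in>V. \<forall>u\<in>unipN n. \<forall>g\<in>GL n. f (u * g) = psiN n \<psi> u * f g) \<and>
     (\<forall>f\<in>V. \<exists>m\<ge>1. fixed_by n (congK n v m) f) \<and>
     (\<forall>m\<ge>1. fin_dim {f\<in>V. fixed_by n (congK n v m) f}) \<and>
     V \<noteq> {\<lambda>_. 0} \<and>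
     (\<forall>U. U \<subseteq> V \<and> fn_subspace U \<and> rt_stable n U \<longrightarrow> U = {\<lambda>_. 0} \<or> U = V)"

end

theory Submission
  imports Defs
begin

text \<open>The values of \<open>W\<close> at the monomial matrices \<open>\<varpi>\<^sup>\<mu> w\<close> (\<open>\<mu> \<in> \<int>\<^sup>n\<close>, \<open>w\<close> a permutation)
  are tied together by the two Hecke eigen-equations. Since \<open>J s\<^sub>i J\<close> is the disjoint union of
  the \<open>q\<close> cosets \<open>x\<^sub>i(r) s\<^sub>i J\<close> (\<open>r\<close> running over residue representatives), the equation
  \<open>X\<^sub>s\<^sub>i W = -W\<close> becomes \<open>q W(\<varpi>\<^sup>\<mu> w s\<^sub>i) = -W(\<varpi>\<^sup>\<mu> w)\<close> whenever \<open>w(i) < w(i+1)\<close> and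
  \<open>\<mu>(w(i+1)) \<le> \<mu>(w(i))\<close>; since \<open>J u J = u J\<close>, the equation \<open>X\<^sub>u W = \<epsilon> W\<close> becomes
  \<open>W(\<varpi>\<^sup>\<mu> w u) = \<epsilon> W(\<varpi>\<^sup>\<mu> w)\<close>. Walking along two chains of adjacent transpositions and
  applying \<open>u\<close> once relates \<open>W(\<varpi>\<^sup>\<mu>)\<close> and \<open>W(\<varpi>\<^sup>\<mu>\<^sup>+\<^sup>e\<^sup>j)\<close> for dominant \<open>\<mu>\<close> and \<open>\<mu> + e\<^sub>j\<close>;
  starting from \<open>W(z) = W(1) = 1\<close> on the centre this recursion yields the formula on \<open>T\<^sup>+\<close>.
  Off \<open>T\<^sup>+\<close> some \<open>k\<^sub>i < k\<^sub>i\<^sub>+\<^sub>1\<close>, and then \<open>d x\<^sub>i(r) = x\<^sub>i(x) d\<close> with \<open>x\<^sub>i(r) \<in> J\<close> and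
  \<open>\<psi>(x) \<noteq> 1\<close>, which forces \<open>W(d) = 0\<close>.\<close>

locale nonarch_valuation =
  fixes v :: "'a::field \<Rightarrow> int"
  assumes nonarch_local_field: "nonarch_local_field v"
begin

lemma v_mult: "x \<noteq> 0 \<Longrightarrow> y \<noteq> 0 \<Longrightarrow> v (x * y) = v x + v y"
  using nonarch_local_field unfolding nonarch_local_field_def by blast

lemma v_add: "x \<noteq> 0 \<Longrightarrow> y \<noteq> 0 \<Longrightarrow> x + y \<noteq> 0 \<Longrightarrow> min (v x) (v y) \<le> v (x + y)"
  using nonarch_local_field unfolding nonarch_local_field_def by blast

lemma v_one [simp]: "v 1 = 0"
  using v_mult[of 1 1] by simp

lemma v_inverse: "x \<noteq> 0 \<Longrightarrow> v (inverse x) = - v x"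
  using v_mult[of x "inverse x"] by simp

lemma v_minus: "x \<noteq> 0 \<Longrightarrow> v (- x) = v x"
proof -
  have "v (-1) = 0"
    using v_mult[of "-1" "-1"] by simp
  then show "x \<noteq> 0 \<Longrightarrow> v (- x) = v x"
    using v_mult[of "-1" x] by simp
qed

lemma v_power: "x \<noteq> 0 \<Longrightarrow> v (x ^ m) = int m * v x"
  by (induction m) (auto simp: v_mult algebra_simps)

lemma v_power_int: "x \<noteq> 0 \<Longrightarrow> v (x powi k) = k * v x"
  by (cases "k \<ge> 0") (auto simp: power_int_def v_power v_inverse)

lemma pw_zero [simp]: "0 \<in> pw v m"
  unfolding pw_def by auto

lemma one_intO [simp]: "1 \<in> intO v"
  unfolding pw_def by auto

lemma pw_mono: "x \<in> pw v m \<Longrightarrow> k \<le> m \<Longrightarrow> x \<in> pw v k"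
  unfolding pw_def by auto

lemma pw_add: "x \<in> pw v m \<Longrightarrow> y \<in> pw v m \<Longrightarrow> x + y \<in> pw v m"
  unfolding pw_def using v_add[of x y] by (cases "x = 0"; cases "y = 0"; cases "x + y = 0"; auto)

lemma pw_uminus: "x \<in> pw v m \<Longrightarrow> - x \<in> pw v m"
  unfolding pw_def using v_minus[of x] by (cases "x = 0") auto

lemma pw_mult: "x \<in> pw v m \<Longrightarrow> y \<in> pw v k \<Longrightarrow> x * y \<in> pw v (m + k)"
  unfolding pw_def using v_mult[of x y] by (cases "x = 0"; cases "y = 0") auto

lemma pw_mult_intO: "x \<in> pw v m \<Longrightarrow> y \<in> intO v \<Longrightarrow> x * y \<in> pw v m"
  using pw_mult[of x m y 0] by simp

lemma intO_mult_pw: "x \<in> intO v \<Longrightarrow> y \<in> pw v m \<Longrightarrow> x * y \<in> pw v m"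
  using pw_mult[of x 0 y m] by simp

lemma pw_sum: "(\<And>x. x \<in> S \<Longrightarrow> f x \<in> pw v m) \<Longrightarrow> sum f S \<in> pw v m"
  by (induction S rule: infinite_finite_induct) (auto intro: pw_add)

lemma intO_prod: "(\<And>x. x \<in> S \<Longrightarrow> f x \<in> intO v) \<Longrightarrow> prod f S \<in> intO v"
  by (induction S rule: infinite_finite_induct) (auto intro: pw_mult_intO)

lemma intO_power: "x \<in> intO v \<Longrightarrow> x ^ k \<in> intO v"
  using intO_prod[of "{..<k}" "\<lambda>_. x"] by simp

lemma prod_pw1:
  assumes "finite S" "\<And>x. x \<in> S \<Longrightarrow> f x \<in> intO v" "s \<in> S" "f s \<in> pw v 1"
  shows "prod f S \<in> pw v 1"
proof -
  have "prod f S = f s * prod f (S - {s})"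
    using assms(1,3) by (simp add: prod.remove)
  moreover have "prod f (S - {s}) \<in> intO v"
    using assms(2) by (intro intO_prod) auto
  ultimately show ?thesis
    using pw_mult_intO assms(4) by auto
qed

lemma unit_inverse_intO: "x \<in> intO v \<Longrightarrow> x \<notin> pw v 1 \<Longrightarrow> x \<noteq> 0 \<and> inverse x \<in> intO v"
  unfolding pw_def by (auto simp: v_inverse)

lemma power_int_pw: "pi0 \<noteq> 0 \<Longrightarrow> v pi0 = 1 \<Longrightarrow> pi0 powi k \<in> pw v k"
  unfolding pw_def using v_power_int[of pi0 k] by auto

end

definition mono_mat :: "nat \<Rightarrow> (nat \<Rightarrow> 'a::field) \<Rightarrow> (nat \<Rightarrow> nat) \<Rightarrow> 'a mat" where
  "mono_mat n f \<pi> = mat n n (\<lambda>(a, b). if a = \<pi> b then f b else 0)"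

definition elem_mat :: "nat \<Rightarrow> nat \<Rightarrow> nat \<Rightarrow> 'a::field \<Rightarrow> 'a mat" where
  "elem_mat n p q c = mat n n (\<lambda>(a, b). of_bool (a = b) + (if a = p \<and> b = q then c else 0))"

definition adj_swap :: "nat \<Rightarrow> nat \<Rightarrow> nat" where
  "adj_swap i b = (if b = i then Suc i else if b = Suc i then i else b)"

definition rot :: "nat \<Rightarrow> nat \<Rightarrow> nat" where
  "rot n b = (if b = 0 then n - 1 else b - 1)"

definition rot_inv :: "nat \<Rightarrow> nat \<Rightarrow> nat" where
  "rot_inv n b = (if b = n - 1 then 0 else Suc b)"

lemma mono_mat_carrier [simp]: "mono_mat n f \<pi> \<in> carrier_mat n n"
  and mono_mat_dim [simp]: "dim_row (mono_mat n f \<pi>) = n" "dim_col (mono_mat n f \<pi>) = n"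
  and mono_mat_index [simp]:
    "a < n \<Longrightarrow> b < n \<Longrightarrow> mono_mat n f \<pi> $$ (a, b) = (if a = \<pi> b then f b else 0)"
  unfolding mono_mat_def by simp_all

lemma elem_mat_carrier [simp]: "elem_mat n p q c \<in> carrier_mat n n"
  and elem_mat_dim [simp]: "dim_row (elem_mat n p q c) = n" "dim_col (elem_mat n p q c) = n"
  and elem_mat_index [simp]: "a < n \<Longrightarrow> b < n \<Longrightarrow>
    elem_mat n p q c $$ (a, b) = of_bool (a = b) + (if a = p \<and> b = q then c else 0)"
  unfolding elem_mat_def by simp_all

lemma mat_mult_index:
  assumes "A \<in> carrier_mat n n" "B \<in> carrier_mat n n" "i < n" "j < n"
  shows "(A * B) $$ (i, j) = (\<Sum>t<n. A $$ (i, t) * B $$ (t, j))"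
  using assms by (simp add: scalar_prod_def atLeast0LessThan)

lemma mono_mat_mult:
  assumes "\<And>b. b < n \<Longrightarrow> \<rho> b < n"
  shows "mono_mat n f \<pi> * mono_mat n g \<rho> = mono_mat n (\<lambda>b. f (\<rho> b) * g b) (\<pi> \<circ> \<rho>)"
proof (rule eq_matI)
  fix a b assume "a < dim_row (mono_mat n (\<lambda>b. f (\<rho> b) * g b) (\<pi> \<circ> \<rho>))"
    "b < dim_col (mono_mat n (\<lambda>b. f (\<rho> b) * g b) (\<pi> \<circ> \<rho>))"
  then have a: "a < n" and b: "b < n" by auto
  have "(mono_mat n f \<pi> * mono_mat n g \<rho>) $$ (a, b)
      = (\<Sum>t<n. mono_mat n f \<pi> $$ (a, t) * mono_mat n g \<rho> $$ (t, b))"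
    using a b by (intro mat_mult_index) auto
  also have "\<dots> = (\<Sum>t<n. if t = \<rho> b then (if a = \<pi> t then f t * g b else 0) else 0)"
    using a b by (intro sum.cong) auto
  also have "\<dots> = (if a = \<pi> (\<rho> b) then f (\<rho> b) * g b else 0)"
    using assms[OF b] by (simp add: sum.delta)
  finally show "(mono_mat n f \<pi> * mono_mat n g \<rho>) $$ (a, b)
      = mono_mat n (\<lambda>b. f (\<rho> b) * g b) (\<pi> \<circ> \<rho>) $$ (a, b)"
    using a b by simp
qed auto

lemma mult_mono_mat_index:
  assumes "X \<in> carrier_mat n n" "a < n" "b < n" "\<pi> b < n"
  shows "(X * mono_mat n f \<pi>) $$ (a, b) = X $$ (a, \<pi> b) * f b"
proof -
  have "(X * mono_mat n f \<pi>) $$ (a, b) = (\<Sum>t<n. X $$ (a, t) * mono_mat n f \<pi> $$ (t, b))"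
    using assms by (intro mat_mult_index) auto
  also have "\<dots> = (\<Sum>t<n. if t = \<pi> b then X $$ (a, t) * f b else 0)"
    using assms by (intro sum.cong) auto
  finally show ?thesis
    using assms by (simp add: sum.delta)
qed

lemma mono_mat_mult_index:
  assumes "X \<in> carrier_mat n n" "a < n" "b < n" "t < n" "\<pi> t = a" "inj_on \<pi> {..<n}"
  shows "(mono_mat n f \<pi> * X) $$ (a, b) = f t * X $$ (t, b)"
proof -
  have "(mono_mat n f \<pi> * X) $$ (a, b) = (\<Sum>s<n. mono_mat n f \<pi> $$ (a, s) * X $$ (s, b))"
    using assms by (intro mat_mult_index) auto
  also have "\<dots> = (\<Sum>s<n. if s = t then f t * X $$ (t, b) else 0)"
    using assms by (intro sum.cong) (auto simp: inj_on_def)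
  finally show ?thesis
    using assms by (simp add: sum.delta)
qed

lemma elem_mat_mult_index:
  assumes "X \<in> carrier_mat n n" "a < n" "b < n" "q < n"
  shows "(elem_mat n p q c * X) $$ (a, b) = X $$ (a, b) + (if a = p then c * X $$ (q, b) else 0)"
proof -
  have "(elem_mat n p q c * X) $$ (a, b) = (\<Sum>t<n. elem_mat n p q c $$ (a, t) * X $$ (t, b))"
    using assms by (intro mat_mult_index) auto
  also have "\<dots> = (\<Sum>t<n. (if t = a then X $$ (a, b) else 0)
      + (if t = q then (if a = p then c * X $$ (q, b) else 0) else 0))"
    using assms by (intro sum.cong) (auto simp: algebra_simps)
  finally show ?thesis
    using assms by (simp add: sum.distrib sum.delta)
qed

lemma mult_elem_mat_index:
  assumes "X \<in> carrier_mat n n" "a < n" "b < n" "p < n"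
  shows "(X * elem_mat n p q c) $$ (a, b) = X $$ (a, b) + (if b = q then X $$ (a, p) * c else 0)"
proof -
  have "(X * elem_mat n p q c) $$ (a, b) = (\<Sum>t<n. X $$ (a, t) * elem_mat n p q c $$ (t, b))"
    using assms by (intro mat_mult_index) auto
  also have "\<dots> = (\<Sum>t<n. (if t = b then X $$ (a, b) else 0)
      + (if t = p then (if b = q then X $$ (a, p) * c else 0) else 0))"
    using assms by (intro sum.cong) (auto simp: algebra_simps)
  finally show ?thesis
    using assms by (simp add: sum.distrib sum.delta)
qed

lemma mono_mat_eq_one: "(\<And>b. b < n \<Longrightarrow> \<pi> b = b \<and> f b = 1) \<Longrightarrow> mono_mat n f \<pi> = 1\<^sub>m n"
  by (rule eq_matI) auto

lemma mono_mat_cong: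
  "(\<And>b. b < n \<Longrightarrow> \<pi> b = \<rho> b \<and> f b = g b) \<Longrightarrow> mono_mat n f \<pi> = mono_mat n g \<rho>"
  by (rule eq_matI) auto

lemma GL_mult: "A \<in> GL n \<Longrightarrow> B \<in> GL n \<Longrightarrow> A * B \<in> GL n"
  unfolding GL_def by (auto simp: det_mult)

lemma one_GL [simp]: "1\<^sub>m n \<in> GL n"
  unfolding GL_def by simp

lemma GL_if_right_inverse:
  "A \<in> carrier_mat n n \<Longrightarrow> B \<in> carrier_mat n n \<Longrightarrow> A * B = 1\<^sub>m n \<Longrightarrow> A \<in> GL n"
  unfolding GL_def using det_mult[of A n B] by auto

lemma mono_mat_GL:
  assumes bij: "bij_betw \<pi> {..<n} {..<n}" and nz: "\<And>b. b < n \<Longrightarrow> f b \<noteq> 0"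
  shows "mono_mat n f \<pi> \<in> GL n"
proof -
  let ?\<rho> = "inv_into {..<n} \<pi>"
  have "\<And>b. b < n \<Longrightarrow> ?\<rho> b < n \<and> \<pi> (?\<rho> b) = b"
    using bij bij_betw_inv_into_right bij_betw_inv_into bij_betwE by fastforce
  then have "mono_mat n f \<pi> * mono_mat n (\<lambda>b. inverse (f (?\<rho> b))) ?\<rho> = 1\<^sub>m n"
    using nz by (subst mono_mat_mult) (auto intro!: mono_mat_eq_one)
  then show ?thesis
    by (rule GL_if_right_inverse[OF mono_mat_carrier mono_mat_carrier])
qed

lemma det_elem_mat: "p < q \<Longrightarrow> det (elem_mat n p q c) = 1"
proof -
  assume pq: "p < q"
  have "upper_triangular (elem_mat n p q c)"
    unfolding upper_triangular_def using pq by auto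
  then have "det (elem_mat n p q c) = prod_list (diag_mat (elem_mat n p q c))"
    by (intro det_upper_triangular) auto
  also have "diag_mat (elem_mat n p q c) = map (\<lambda>_. 1) [0..<n]"
    unfolding diag_mat_def using pq by (auto intro!: map_cong)
  finally show ?thesis
    by (simp add: map_replicate_const)
qed

lemma elem_mat_GL: "p < q \<Longrightarrow> elem_mat n p q c \<in> GL n"
  unfolding GL_def by (simp add: det_elem_mat)

lemma elem_mat_unipN: "p < q \<Longrightarrow> elem_mat n p q c \<in> unipN n"
  unfolding unipN_def by auto

lemma elem_mat_mult_elem_mat:
  assumes "p \<noteq> q" "q < n"
  shows "elem_mat n p q c * elem_mat n p q d = elem_mat n p q (c + d)"
proof (rule eq_matI)
  fix i j assume "i < dim_row (elem_mat n p q (c + d))" "j < dim_col (elem_mat n p q (c + d))"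
  then show "(elem_mat n p q c * elem_mat n p q d) $$ (i, j) = elem_mat n p q (c + d) $$ (i, j)"
    using assms by (subst elem_mat_mult_index) (auto simp: algebra_simps)
qed auto

lemma elem_mat_zero [simp]: "elem_mat n p q 0 = 1\<^sub>m n"
  by (rule eq_matI) auto

lemma psiN_elem_mat:
  assumes "Suc i < n"
  shows "psiN n \<psi> (elem_mat n i (Suc i) x) = \<psi> x"
proof -
  have "(\<Sum>t<n - 1. elem_mat n i (Suc i) x $$ (t, t + 1)) = (\<Sum>t<n - 1. if t = i then x else 0)"
    by (rule sum.cong) auto
  moreover have "i < n - 1"
    using assms by simp
  ultimately show ?thesis
    unfolding psiN_def by simp
qed

lemma adj_swap_less: "Suc i < n \<Longrightarrow> b < n \<Longrightarrow> adj_swap i b < n"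
  unfolding adj_swap_def by auto

lemma adj_swap_adj_swap [simp]: "adj_swap i (adj_swap i b) = b"
  unfolding adj_swap_def by auto

lemma bij_adj_swap: "Suc i < n \<Longrightarrow> bij_betw (adj_swap i) {..<n} {..<n}"
  by (rule bij_betwI[where g = "adj_swap i"]) (auto simp: adj_swap_less)

lemma rot_less: "n \<ge> 1 \<Longrightarrow> b < n \<Longrightarrow> rot n b < n"
  unfolding rot_def by auto

lemma rot_inv_less: "n \<ge> 1 \<Longrightarrow> b < n \<Longrightarrow> rot_inv n b < n"
  and rot_rot_inv: "n \<ge> 1 \<Longrightarrow> b < n \<Longrightarrow> rot n (rot_inv n b) = b"
  and rot_inv_rot: "n \<ge> 1 \<Longrightarrow> b < n \<Longrightarrow> rot_inv n (rot n b) = b"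
  unfolding rot_def rot_inv_def by auto

lemma sperm_eq_mono_mat: "sperm n i = mono_mat n (\<lambda>_. 1) (adj_swap i)"
  unfolding sperm_def mono_mat_def adj_swap_def by (rule eq_matI) auto

lemma sperm_carrier [simp]: "sperm n i \<in> carrier_mat n n"
  unfolding sperm_def by simp

lemma umat_eq_mono_mat: "n \<ge> 1 \<Longrightarrow> umat n pi0 = mono_mat n (\<lambda>b. if b = 0 then pi0 else 1) (rot n)"
  unfolding umat_def mono_mat_def rot_def by (rule eq_matI) auto

lemma diagpw_eq_mono_mat: "diagpw n pi0 k = mono_mat n (\<lambda>b. pi0 powi k b) id"
  unfolding diagpw_def mono_mat_def by (rule eq_matI) auto

lemma permutes_not_id_descent:
  fixes p :: "nat \<Rightarrow> nat"
  assumes p: "p permutes {0..<n}" and "p \<noteq> id"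
  shows "\<exists>i<n. p i < i"
proof (rule ccontr)
  assume "\<not> (\<exists>i<n. p i < i)"
  then have ge: "\<And>i. i \<in> {0..<n} \<Longrightarrow> id i \<le> p i"
    by (simp add: leI)
  have "sum id {0..<n} = sum p {0..<n}"
    using sum.permute[OF p, of id] by (simp add: comp_def)
  then have "\<And>i. i \<in> {0..<n} \<Longrightarrow> p i = i"
    using sum_mono_inv[OF _ ge] by force
  then have "p x = x" for x
    using permutes_not_in[OF p] by (cases "x < n") auto
  then have "p = id"
    by auto
  with \<open>p \<noteq> id\<close> show False ..
qed

context nonarch_valuation
begin

lemma iwahoriJ_carrier: "A \<in> iwahoriJ n v \<Longrightarrow> A \<in> carrier_mat n n"
  and iwahoriJ_det: "A \<in> iwahoriJ n v \<Longrightarrow> det A \<noteq> 0 \<and> v (det A) = 0"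
  and iwahoriJ_intO: "A \<in> iwahoriJ n v \<Longrightarrow> i < n \<Longrightarrow> j < n \<Longrightarrow> A $$ (i, j) \<in> intO v"
  and iwahoriJ_below_diag: "A \<in> iwahoriJ n v \<Longrightarrow> i < n \<Longrightarrow> j < i \<Longrightarrow> A $$ (i, j) \<in> pw v 1"
  unfolding iwahoriJ_def by simp_all

lemma iwahoriJ_pw_below_diag:
  "A \<in> iwahoriJ n v \<Longrightarrow> i < n \<Longrightarrow> j < n \<Longrightarrow> A $$ (i, j) \<in> pw v (of_bool (j < i))"
  using iwahoriJ_intO iwahoriJ_below_diag by (cases "j < i") auto

lemma iwahoriJI:
  assumes "A \<in> carrier_mat n n" "det A \<noteq> 0" "v (det A) = 0"
    and entries: "\<And>i j. i < n \<Longrightarrow> j < n \<Longrightarrow> A $$ (i, j) \<in> pw v (of_bool (j < i))"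
  shows "A \<in> iwahoriJ n v"
proof -
  have "A $$ (i, j) \<in> intO v" if "i < n" "j < n" for i j
    using entries[OF that] by (rule pw_mono) simp
  moreover have "A $$ (i, j) \<in> pw v 1" if "i < n" "j < i" for i j
    using entries[of i j] that by simp
  ultimately show ?thesis
    using assms unfolding iwahoriJ_def by auto
qed

lemma one_iwahoriJ: "1\<^sub>m n \<in> iwahoriJ n v"
  by (rule iwahoriJI) auto

lemma elem_mat_iwahoriJ: "p < q \<Longrightarrow> q < n \<Longrightarrow> c \<in> intO v \<Longrightarrow> elem_mat n p q c \<in> iwahoriJ n v"
  by (rule iwahoriJI) (auto simp: det_elem_mat)

lemma iwahoriJ_mult:
  assumes A: "A \<in> iwahoriJ n v" and B: "B \<in> iwahoriJ n v"
  shows "A * B \<in> iwahoriJ n v"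
proof (rule iwahoriJI)
  have cA: "A \<in> carrier_mat n n" and cB: "B \<in> carrier_mat n n"
    using A B iwahoriJ_carrier by auto
  show "A * B \<in> carrier_mat n n"
    using cA cB by simp
  show "det (A * B) \<noteq> 0" "v (det (A * B)) = 0"
    using det_mult[OF cA cB] iwahoriJ_det[OF A] iwahoriJ_det[OF B] v_mult by auto
  fix i j assume ij: "i < n" "j < n"
  have "A $$ (i, t) * B $$ (t, j) \<in> pw v (of_bool (j < i))" if "t < n" for t
    using pw_mult[OF iwahoriJ_pw_below_diag[OF A ij(1) that] iwahoriJ_pw_below_diag[OF B that ij(2)]]
    by (rule pw_mono) auto
  then show "(A * B) $$ (i, j) \<in> pw v (of_bool (j < i))"
    unfolding mat_mult_index[OF cA cB ij] by (intro pw_sum) simp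
qed

lemma signof_intO: "signof p \<in> intO v"
  using signof_pm_one[of p, where 'a = 'a] pw_uminus[OF one_intO] by auto

lemma det_intO:
  assumes "A \<in> carrier_mat k k" "\<And>i j. i < k \<Longrightarrow> j < k \<Longrightarrow> A $$ (i, j) \<in> intO v"
  shows "det A \<in> intO v"
proof -
  have "signof p * (\<Prod>i = 0..<k. A $$ (i, p i)) \<in> intO v" if "p permutes {0..<k}" for p
    using that assms(2) by (intro intO_mult_pw[OF signof_intO] intO_prod) (auto simp: permutes_in_image)
  then show ?thesis
    unfolding det_def'[OF assms(1)] by (auto intro: pw_sum)
qed

text \<open>Modulo \<open>\<mathfrak>p\<close> an element of \<open>J\<close> is upper triangular, so its determinant is congruent
  to the product of its diagonal entries, which must therefore be units.\<close>

lemma iwahoriJ_diag_unit: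
  assumes A: "A \<in> iwahoriJ n v" and j: "j < n"
  shows "A $$ (j, j) \<noteq> 0 \<and> inverse (A $$ (j, j)) \<in> intO v"
proof -
  have "A $$ (j, j) \<notin> pw v 1"
  proof
    assume jp: "A $$ (j, j) \<in> pw v 1"
    let ?t = "\<lambda>p. signof p * (\<Prod>i = 0..<n. A $$ (i, p i))"
    have "?t p \<in> pw v 1" if p: "p permutes {0..<n}" for p
    proof (cases "p = id")
      case True
      then show ?thesis
        using j jp by (auto intro!: prod_pw1[of _ _ j] iwahoriJ_intO[OF A])
    next
      case False
      then obtain i where "i < n" "p i < i"
        using permutes_not_id_descent[OF p] by blast
      then have "(\<Prod>i = 0..<n. A $$ (i, p i)) \<in> pw v 1"
        using p by (intro prod_pw1[of _ _ i])
          (auto intro: iwahoriJ_intO[OF A] iwahoriJ_below_diag[OF A] simp: permutes_in_image)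
      then show ?thesis
        by (rule intO_mult_pw[OF signof_intO])
    qed
    then have "det A \<in> pw v 1"
      unfolding det_def'[OF iwahoriJ_carrier[OF A]] by (auto intro: pw_sum)
    then show False
      using iwahoriJ_det[OF A] unfolding pw_def by auto
  qed
  then show ?thesis
    using unit_inverse_intO iwahoriJ_intO[OF A j j] by blast
qed

lemma iwahoriJ_adj_scaled_intO:
  assumes A: "A \<in> iwahoriJ n v" and ij: "i < n" "j < n"
  shows "(inverse (det A) \<cdot>\<^sub>m adj_mat A) $$ (i, j) \<in> intO v"
proof -
  have cA: "A \<in> carrier_mat n n"
    using iwahoriJ_carrier[OF A] .
  have "det (mat_delete A j i) \<in> intO v"
    using ij cA by (intro det_intO) (auto simp: mat_delete_def intro!: iwahoriJ_intO[OF A])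
  moreover have "inverse (det A) \<in> intO v"
    using iwahoriJ_det[OF A] by (auto simp: pw_def v_inverse)
  moreover have "(-1::'a) ^ (j + i) \<in> intO v"
    by (intro intO_power pw_uminus one_intO)
  ultimately show ?thesis
    using ij cA by (simp add: adj_mat_def cofactor_def pw_mult_intO)
qed

text \<open>Reading \<open>B A = 1\<close> in column \<open>j\<close> and using that \<open>A\<close> is triangular modulo \<open>\<mathfrak>p\<close> with unit
  diagonal shows, by induction on \<open>j\<close>, that \<open>B\<close> is triangular modulo \<open>\<mathfrak>p\<close> as well.\<close>

lemma left_inverse_below_diag:
  assumes A: "A \<in> iwahoriJ n v" and cB: "B \<in> carrier_mat n n" and BA: "B * A = 1\<^sub>m n"
    and B_int: "\<And>i j. i < n \<Longrightarrow> j < n \<Longrightarrow> B $$ (i, j) \<in> intO v"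
  shows "j < i \<Longrightarrow> i < n \<Longrightarrow> B $$ (i, j) \<in> pw v 1"
proof (induction j arbitrary: i rule: less_induct)
  case (less j)
  then have j: "j < n" by simp
  let ?f = "\<lambda>t. B $$ (i, t) * A $$ (t, j)"
  have "0 = (B * A) $$ (i, j)"
    using BA less.prems by simp
  also have "\<dots> = sum ?f {..<n}"
    using less.prems j by (intro mat_mult_index[OF cB iwahoriJ_carrier[OF A]])
  also have "\<dots> = ?f j + sum ?f ({..<n} - {j})"
    using j by (intro sum.remove) auto
  finally have fj: "?f j = - sum ?f ({..<n} - {j})"
    by (simp add: eq_neg_iff_add_eq_0)
  have "?f t \<in> pw v 1" if t: "t \<in> {..<n} - {j}" for t
  proof (cases "t < j")
    case True
    then show ?thesis
      using less t by (intro pw_mult_intO iwahoriJ_intO[OF A]) auto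
  next
    case False
    then show ?thesis
      using less t by (intro intO_mult_pw B_int iwahoriJ_below_diag[OF A]) auto
  qed
  then have fj_pw: "?f j \<in> pw v 1"
    unfolding fj by (intro pw_uminus pw_sum) auto
  have "?f j * inverse (A $$ (j, j)) \<in> pw v 1"
    using pw_mult_intO[OF fj_pw] iwahoriJ_diag_unit[OF A j] by blast
  then show ?case
    using iwahoriJ_diag_unit[OF A j] by (simp add: mult.assoc)
qed

lemma iwahoriJ_inverse:
  assumes A: "A \<in> iwahoriJ n v"
  shows "\<exists>B\<in>iwahoriJ n v. A * B = 1\<^sub>m n \<and> B * A = 1\<^sub>m n"
proof -
  have cA: "A \<in> carrier_mat n n" and d: "det A \<noteq> 0" "v (det A) = 0"
    using iwahoriJ_carrier[OF A] iwahoriJ_det[OF A] by auto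
  define B where "B = inverse (det A) \<cdot>\<^sub>m adj_mat A"
  have cB: "B \<in> carrier_mat n n"
    using adj_mat(1)[OF cA] unfolding B_def by simp
  have AB: "A * B = 1\<^sub>m n"
    unfolding B_def using mult_smult_distrib[OF cA adj_mat(1)[OF cA]] adj_mat(2)[OF cA] d
    by (auto intro!: eq_matI)
  have BA: "B * A = 1\<^sub>m n"
    unfolding B_def using mult_smult_assoc_mat[OF adj_mat(1)[OF cA] cA] adj_mat(3)[OF cA] d
    by (auto intro!: eq_matI)
  have B_int: "\<And>i j. i < n \<Longrightarrow> j < n \<Longrightarrow> B $$ (i, j) \<in> intO v"
    unfolding B_def using iwahoriJ_adj_scaled_intO[OF A] .
  have dAB: "det A * det B = 1"
    using det_mult[OF cA cB] AB by simp
  have "B \<in> iwahoriJ n v"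
  proof (rule iwahoriJI[OF cB])
    show dB: "det B \<noteq> 0"
      using dAB by auto
    show "v (det B) = 0"
      using dAB d v_mult[OF d(1) dB] by simp
    show "B $$ (i, j) \<in> pw v (of_bool (j < i))" if "i < n" "j < n" for i j
      using that B_int left_inverse_below_diag[OF A cB BA B_int] by (cases "j < i") auto
  qed
  then show ?thesis
    using AB BA by blast
qed

definition iwahori_coset :: "nat \<Rightarrow> 'a mat \<Rightarrow> 'a mat set" where
  "iwahori_coset n X = {X * b | b. b \<in> iwahoriJ n v}"

lemma iwahori_coset_self: "X \<in> carrier_mat n n \<Longrightarrow> X \<in> iwahori_coset n X"
  unfolding iwahori_coset_def using one_iwahoriJ by force

lemma some_iwahori_coset:
  assumes "X \<in> carrier_mat n n"
  shows "\<exists>b\<in>iwahoriJ n v. (SOME \<gamma>. \<gamma> \<in> iwahori_coset n X) = X * b"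
proof -
  have "(SOME \<gamma>. \<gamma> \<in> iwahori_coset n X) \<in> iwahori_coset n X"
    using iwahori_coset_self[OF assms] by (rule someI)
  then show ?thesis
    unfolding iwahori_coset_def by blast
qed

lemma iwahori_coset_mult:
  assumes X: "X \<in> carrier_mat n n" and B: "B \<in> iwahoriJ n v"
  shows "iwahori_coset n (X * B) = iwahori_coset n X"
proof
  have cB: "B \<in> carrier_mat n n"
    using iwahoriJ_carrier[OF B] .
  show "iwahori_coset n (X * B) \<subseteq> iwahori_coset n X"
  proof
    fix Y assume "Y \<in> iwahori_coset n (X * B)"
    then obtain b where b: "b \<in> iwahoriJ n v" "Y = X * B * b"
      unfolding iwahori_coset_def by auto
    then have "Y = X * (B * b)"
      using X cB iwahoriJ_carrier[OF b(1)] by simp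
    then show "Y \<in> iwahori_coset n X"
      unfolding iwahori_coset_def using iwahoriJ_mult[OF B b(1)] by auto
  qed
  show "iwahori_coset n X \<subseteq> iwahori_coset n (X * B)"
  proof
    fix Y assume "Y \<in> iwahori_coset n X"
    then obtain b where b: "b \<in> iwahoriJ n v" "Y = X * b"
      unfolding iwahori_coset_def by auto
    obtain B' where B': "B' \<in> iwahoriJ n v" "B * B' = 1\<^sub>m n"
      using iwahoriJ_inverse[OF B] by blast
    have "X * B * (B' * b) = X * (B * B') * b"
      using X cB iwahoriJ_carrier[OF B'(1)] iwahoriJ_carrier[OF b(1)]
      by (simp add: assoc_mult_mat[of _ n n _ n _ n])
    then have "Y = X * B * (B' * b)"
      using B'(2) b X by simp
    then show "Y \<in> iwahori_coset n (X * B)"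
      unfolding iwahori_coset_def using iwahoriJ_mult[OF B'(1) b(1)] by blast
  qed
qed

lemma left_cosets_eq: "left_cosets n v g = iwahori_coset n ` double_coset n v g"
  unfolding left_cosets_def iwahori_coset_def by blast

definition residue_rel :: "('a \<times> 'a) set" where
  "residue_rel = {(x, y). x \<in> intO v \<and> y \<in> intO v \<and> x - y \<in> pw v 1}"

definition residue_reps :: "'a set" where
  "residue_reps = (\<lambda>C. SOME y. y \<in> C) ` residue_classes v"

lemma residue_classes_eq: "residue_classes v = intO v // residue_rel"
  unfolding residue_classes_def residue_rel_def by simp

lemma equiv_residue_rel: "equiv (intO v) residue_rel"
proof (rule equivI)
  show "refl_on (intO v) residue_rel"
    unfolding refl_on_def residue_rel_def by auto
  show "sym residue_rel"
    unfolding sym_def residue_rel_def using pw_uminus by fastforce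
  show "trans residue_rel"
    unfolding trans_def residue_rel_def using pw_add by fastforce
qed (auto simp: residue_rel_def)

lemma finite_residue_classes: "finite (residue_classes v)"
  using nonarch_local_field unfolding nonarch_local_field_def by blast

lemma resq_pos: "resq v > 0"
proof -
  have "residue_classes v \<noteq> {}"
    unfolding residue_classes_eq by (metis empty_iff one_intO quotientI)
  then show ?thesis
    unfolding resq_def using finite_residue_classes by (simp add: card_gt_0_iff)
qed

lemma some_in_residue_class: "C \<in> residue_classes v \<Longrightarrow> (SOME y. y \<in> C) \<in> C"
  using in_quotient_imp_non_empty[OF equiv_residue_rel] residue_classes_eq
  by (metis ex_in_conv someI_ex)

lemma residue_class_subset: "C \<in> residue_classes v \<Longrightarrow> C \<subseteq> intO v"
  using residue_classes_eq by (metis Union_quotient equiv_residue_rel Union_upper)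

lemma residue_class_rel:
  assumes "C \<in> residue_classes v" "C' \<in> residue_classes v"
    and "((SOME y. y \<in> C), (SOME y. y \<in> C')) \<in> residue_rel"
  shows "C = C'"
  using quotient_eqI[OF equiv_residue_rel, of C C'] assms some_in_residue_class residue_classes_eq
  by auto

lemma residue_reps_intO: "r \<in> residue_reps \<Longrightarrow> r \<in> intO v"
  unfolding residue_reps_def using some_in_residue_class residue_class_subset by blast

lemma residue_reps_exhaust: "x \<in> intO v \<Longrightarrow> \<exists>r\<in>residue_reps. x - r \<in> pw v 1"
proof -
  assume x: "x \<in> intO v"
  let ?C = "residue_rel `` {x}"
  have C: "?C \<in> residue_classes v"
    using x residue_classes_eq by (simp add: quotientI)
  then have "x - (SOME y. y \<in> ?C) \<in> pw v 1"
    using some_in_residue_class[OF C] unfolding residue_rel_def by auto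
  moreover have "(SOME y. y \<in> ?C) \<in> residue_reps"
    unfolding residue_reps_def using C by blast
  ultimately show ?thesis
    by blast
qed

lemma residue_reps_distinct:
  assumes "r \<in> residue_reps" "r' \<in> residue_reps" "r - r' \<in> pw v 1"
  shows "r = r'"
proof -
  obtain C C' where "C \<in> residue_classes v" "r = (SOME y. y \<in> C)"
    "C' \<in> residue_classes v" "r' = (SOME y. y \<in> C')"
    using assms(1,2) unfolding residue_reps_def by auto
  moreover have "(r, r') \<in> residue_rel"
    unfolding residue_rel_def using assms residue_reps_intO by auto
  ultimately show ?thesis
    using residue_class_rel by blast
qed

lemma card_residue_reps: "card residue_reps = resq v"
proof -
  have "inj_on (\<lambda>C. SOME y. y \<in> C) (residue_classes v)"
  proof (rule inj_onI)
    fix C C' assume C: "C \<in> residue_classes v" and C': "C' \<in> residue_classes v"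
      and eq: "(SOME y. y \<in> C) = (SOME y. y \<in> C')"
    have "(SOME y. y \<in> C) \<in> intO v"
      using some_in_residue_class[OF C] residue_class_subset[OF C] by blast
    then show "C = C'"
      using residue_class_rel[OF C C'] eq unfolding residue_rel_def by simp
  qed
  then show ?thesis
    unfolding residue_reps_def resq_def by (rule card_image)
qed

end

lemma mult_left_inverse_mat:
  fixes A B X :: "'a::semiring_1 mat"
  assumes "A \<in> carrier_mat n n" "B \<in> carrier_mat n n" "X \<in> carrier_mat n n"
    and "A * B = 1\<^sub>m n"
  shows "A * (B * X) = X"
proof -
  have "A * (B * X) = A * B * X"
    using assoc_mult_mat[OF assms(1-3)] by (rule sym)
  also have "\<dots> = X"
    unfolding assms(4) using assms(3) by (rule left_mult_one_mat)
  finally show ?thesis .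
qed

lemma det_conj:
  assumes A: "A \<in> carrier_mat n n" and B: "B \<in> carrier_mat n n" and X: "X \<in> carrier_mat n n"
    and BA: "B * A = 1\<^sub>m n"
  shows "det (B * (X * A)) = det X"
proof -
  have "det (B * (X * A)) = det X * (det B * det A)"
    using det_mult[OF B mult_carrier_mat[OF X A]] det_mult[OF X A] by (simp add: ac_simps)
  also have "det B * det A = 1"
    using det_mult[OF B A] BA by simp
  finally show ?thesis
    by simp
qed

locale iwahori_frame = nonarch_valuation v for v :: "'a::field \<Rightarrow> int" +
  fixes n :: nat and pi0 :: 'a
  assumes n_pos: "n \<ge> 1" and pi0_nonzero: "pi0 \<noteq> 0" and v_pi0: "v pi0 = 1"
begin

abbreviation "J \<equiv> iwahoriJ n v"

lemma mult_carrier_n [simp]: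
  "(A::'a mat) \<in> carrier_mat n n \<Longrightarrow> B \<in> carrier_mat n n \<Longrightarrow> A * B \<in> carrier_mat n n"
  by simp

lemma one_mult_n [simp]: "(A::'a mat) \<in> carrier_mat n n \<Longrightarrow> 1\<^sub>m n * A = A"
  by (rule left_mult_one_mat)

lemma mult_one_n [simp]: "(A::'a mat) \<in> carrier_mat n n \<Longrightarrow> A * 1\<^sub>m n = A"
  by (rule right_mult_one_mat)

lemma mult_assoc_n [simp]:
  "(A::'a mat) \<in> carrier_mat n n \<Longrightarrow> B \<in> carrier_mat n n \<Longrightarrow> C \<in> carrier_mat n n \<Longrightarrow>
   A * B * C = A * (B * C)"
  by (rule assoc_mult_mat) auto

lemma sperm_GL: "Suc i < n \<Longrightarrow> sperm n i \<in> GL n"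
  unfolding sperm_eq_mono_mat by (rule mono_mat_GL[OF bij_adj_swap]) auto

lemma sperm_mult_sperm: "Suc i < n \<Longrightarrow> sperm n i * sperm n i = 1\<^sub>m n"
  unfolding sperm_eq_mono_mat by (subst mono_mat_mult) (auto simp: adj_swap_less intro!: mono_mat_eq_one)

lemma sperm_mult_sperm_mult: "Suc i < n \<Longrightarrow> (X::'a mat) \<in> carrier_mat n n \<Longrightarrow> sperm n i * (sperm n i * X) = X"
  by (rule mult_left_inverse_mat[OF sperm_carrier sperm_carrier _ sperm_mult_sperm])

lemma elem_mat_mult_elem_mat_mult:
  assumes "p \<noteq> q" "q < n" "X \<in> carrier_mat n n"
  shows "elem_mat n p q c * (elem_mat n p q d * X) = elem_mat n p q (c + d) * X"
proof -
  have "elem_mat n p q c * (elem_mat n p q d * X) = elem_mat n p q c * elem_mat n p q d * X"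
    using assoc_mult_mat[OF elem_mat_carrier elem_mat_carrier assms(3)] by (rule sym)
  then show ?thesis
    unfolding elem_mat_mult_elem_mat[OF assms(1,2)] .
qed

lemma sperm_conj_index:
  fixes X :: "'a mat"
  assumes X: "X \<in> carrier_mat n n" and i: "Suc i < n" and ab: "a < n" "b < n"
  shows "(sperm n i * (X * sperm n i)) $$ (a, b) = X $$ (adj_swap i a, adj_swap i b)"
proof -
  have inj: "inj_on (adj_swap i) {..<n}"
    using bij_adj_swap[OF i] bij_betw_imp_inj_on by blast
  have "sperm n i * (X * sperm n i) = sperm n i * X * sperm n i"
    using X by simp
  also have "\<dots> $$ (a, b) = (sperm n i * X) $$ (a, adj_swap i b) * 1"
    unfolding sperm_eq_mono_mat using X ab i by (subst mult_mono_mat_index) (auto simp: adj_swap_less)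
  also have "(sperm n i * X) $$ (a, adj_swap i b) = 1 * X $$ (adj_swap i a, adj_swap i b)"
    unfolding sperm_eq_mono_mat using X ab i inj
    by (subst mono_mat_mult_index[where t = "adj_swap i a"]) (auto simp: adj_swap_less)
  finally show ?thesis
    by simp
qed

lemma sperm_conj_iwahoriJ:
  assumes X: "X \<in> J" and i: "Suc i < n" and X_pw: "X $$ (i, Suc i) \<in> pw v 1"
  shows "sperm n i * (X * sperm n i) \<in> J"
proof (rule iwahoriJI)
  have cX: "X \<in> carrier_mat n n"
    using iwahoriJ_carrier[OF X] .
  show "sperm n i * (X * sperm n i) \<in> carrier_mat n n"
    using cX by simp
  have "det (sperm n i * (X * sperm n i)) = det X"
    using det_conj[OF sperm_carrier sperm_carrier cX sperm_mult_sperm[OF i]] .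
  then show "det (sperm n i * (X * sperm n i)) \<noteq> 0" "v (det (sperm n i * (X * sperm n i))) = 0"
    using iwahoriJ_det[OF X] by auto
  fix a b assume ab: "a < n" "b < n"
  show "(sperm n i * (X * sperm n i)) $$ (a, b) \<in> pw v (of_bool (b < a))"
  proof (cases "a = Suc i \<and> b = i")
    case True
    then show ?thesis
      using sperm_conj_index[OF cX i ab] X_pw by (simp add: adj_swap_def)
  next
    case False
    then have "of_bool (b < a) \<le> (of_bool (adj_swap i b < adj_swap i a) :: int)"
      unfolding adj_swap_def by auto
    moreover have "X $$ (adj_swap i a, adj_swap i b) \<in> pw v (of_bool (adj_swap i b < adj_swap i a))"
      using iwahoriJ_pw_below_diag[OF X] adj_swap_less[OF i] ab by blast
    ultimately show ?thesis
      unfolding sperm_conj_index[OF cX i ab] by (rule pw_mono[rotated])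
  qed
qed

text \<open>With \<open>r \<equiv> A\<^sub>i\<^sub>,\<^sub>i\<^sub>+\<^sub>1 / A\<^sub>i\<^sub>+\<^sub>1\<^sub>,\<^sub>i\<^sub>+\<^sub>1\<close> modulo \<open>\<mathfrak>p\<close>, the \<open>(i, i+1)\<close> entry of
  \<open>x\<^sub>i(-r) A\<close> lies in \<open>\<mathfrak>p\<close>, so conjugating \<open>x\<^sub>i(-r) A\<close> by \<open>s\<^sub>i\<close> stays in \<open>J\<close>.\<close>

lemma iwahoriJ_mult_sperm:
  assumes A: "A \<in> J" and i: "Suc i < n"
  shows "\<exists>r\<in>residue_reps. \<exists>C\<in>J. A * sperm n i = elem_mat n i (Suc i) r * sperm n i * C"
proof -
  have cA: "A \<in> carrier_mat n n"
    using iwahoriJ_carrier[OF A] .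
  have u: "A $$ (Suc i, Suc i) \<noteq> 0" "inverse (A $$ (Suc i, Suc i)) \<in> intO v"
    using iwahoriJ_diag_unit[OF A i] by auto
  define x where "x = A $$ (i, Suc i) * inverse (A $$ (Suc i, Suc i))"
  have "x \<in> intO v"
    unfolding x_def using u i by (intro pw_mult_intO iwahoriJ_intO[OF A]) auto
  then obtain r where r: "r \<in> residue_reps" "x - r \<in> pw v 1"
    using residue_reps_exhaust by blast
  define A' where "A' = elem_mat n i (Suc i) (- r) * A"
  have A'J: "A' \<in> J"
    unfolding A'_def using i residue_reps_intO[OF r(1)]
    by (intro iwahoriJ_mult[OF elem_mat_iwahoriJ A]) (auto intro: pw_uminus)
  have "A' $$ (i, Suc i) = (x - r) * A $$ (Suc i, Suc i)"
    unfolding A'_def x_def using i cA u by (subst elem_mat_mult_index) (auto simp: algebra_simps)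
  then have "A' $$ (i, Suc i) \<in> pw v 1"
    using r(2) iwahoriJ_intO[OF A, of "Suc i" "Suc i"] i by (simp add: pw_mult_intO)
  then have CJ: "sperm n i * (A' * sperm n i) \<in> J"
    using sperm_conj_iwahoriJ[OF A'J i] by blast
  have "elem_mat n i (Suc i) r * sperm n i * (sperm n i * (A' * sperm n i))
      = elem_mat n i (Suc i) r * (elem_mat n i (Suc i) (- r) * (A * sperm n i))"
    unfolding A'_def using cA sperm_mult_sperm_mult[OF i] by simp
  also have "\<dots> = A * sperm n i"
    using elem_mat_mult_elem_mat_mult[of i "Suc i" "A * sperm n i" r "- r"] i cA by simp
  finally show ?thesis
    using r(1) CJ by metis
qed

lemma left_cosets_sperm:
  assumes i: "Suc i < n"
  shows "left_cosets n v (sperm n i)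
    = (\<lambda>r. iwahori_coset n (elem_mat n i (Suc i) r * sperm n i)) ` residue_reps"
proof
  show "left_cosets n v (sperm n i)
    \<subseteq> (\<lambda>r. iwahori_coset n (elem_mat n i (Suc i) r * sperm n i)) ` residue_reps"
  proof
    fix C assume "C \<in> left_cosets n v (sperm n i)"
    then obtain a b where ab: "a \<in> J" "b \<in> J" "C = iwahori_coset n (a * sperm n i * b)"
      unfolding left_cosets_eq double_coset_def by blast
    obtain r c where rc: "r \<in> residue_reps" "c \<in> J"
      "a * sperm n i = elem_mat n i (Suc i) r * sperm n i * c"
      using iwahoriJ_mult_sperm[OF ab(1) i] by blast
    have "C = iwahori_coset n (a * sperm n i)"
      using ab iwahori_coset_mult[OF _ ab(2), of "a * sperm n i"] iwahoriJ_carrier[OF ab(1)] by simp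
    also have "\<dots> = iwahori_coset n (elem_mat n i (Suc i) r * sperm n i)"
      using rc iwahori_coset_mult by simp
    finally show "C \<in> (\<lambda>r. iwahori_coset n (elem_mat n i (Suc i) r * sperm n i)) ` residue_reps"
      using rc(1) by blast
  qed
  show "(\<lambda>r. iwahori_coset n (elem_mat n i (Suc i) r * sperm n i)) ` residue_reps
    \<subseteq> left_cosets n v (sperm n i)"
  proof
    fix C assume "C \<in> (\<lambda>r. iwahori_coset n (elem_mat n i (Suc i) r * sperm n i)) ` residue_reps"
    then obtain r where r: "r \<in> residue_reps" "C = iwahori_coset n (elem_mat n i (Suc i) r * sperm n i)"
      by blast
    have "elem_mat n i (Suc i) r \<in> J"
      using i residue_reps_intO[OF r(1)] by (intro elem_mat_iwahoriJ) auto
    then have "elem_mat n i (Suc i) r * sperm n i * 1\<^sub>m n \<in> double_coset n v (sperm n i)"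
      unfolding double_coset_def using one_iwahoriJ by blast
    then show "C \<in> left_cosets n v (sperm n i)"
      unfolding left_cosets_eq using r(2) by simp
  qed
qed

lemma inj_on_left_cosets_sperm:
  assumes i: "Suc i < n"
  shows "inj_on (\<lambda>r. iwahori_coset n (elem_mat n i (Suc i) r * sperm n i)) residue_reps"
proof (rule inj_onI)
  fix r r' assume r: "r \<in> residue_reps" and r': "r' \<in> residue_reps"
    and "iwahori_coset n (elem_mat n i (Suc i) r * sperm n i)
      = iwahori_coset n (elem_mat n i (Suc i) r' * sperm n i)"
  then have "elem_mat n i (Suc i) r' * sperm n i \<in> iwahori_coset n (elem_mat n i (Suc i) r * sperm n i)"
    using iwahori_coset_self[of "elem_mat n i (Suc i) r' * sperm n i"] by simp
  then obtain b where b: "b \<in> J" "elem_mat n i (Suc i) r' * sperm n i = elem_mat n i (Suc i) r * sperm n i * b"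
    unfolding iwahori_coset_def by blast
  have cb: "b \<in> carrier_mat n n"
    using iwahoriJ_carrier[OF b(1)] .
  have "b = sperm n i * (elem_mat n i (Suc i) (- r) * (elem_mat n i (Suc i) r * (sperm n i * b)))"
    using elem_mat_mult_elem_mat_mult[of i "Suc i" "sperm n i * b" "- r" r] i cb
      sperm_mult_sperm_mult[OF i] by simp
  also have "\<dots> = sperm n i * (elem_mat n i (Suc i) (r' - r) * sperm n i)"
    using b(2) cb elem_mat_mult_elem_mat_mult[of i "Suc i" "sperm n i" "- r" r'] i by simp
  finally have "b $$ (Suc i, i) = elem_mat n i (Suc i) (r' - r) $$ (adj_swap i (Suc i), adj_swap i i)"
    using sperm_conj_index[OF elem_mat_carrier i] i by simp
  also have "\<dots> = r' - r"
    using i by (simp add: adj_swap_def)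
  finally have "r' - r \<in> pw v 1"
    using iwahoriJ_below_diag[OF b(1), of "Suc i" i] i by simp
  then show "r = r'"
    using residue_reps_distinct[OF r' r] by simp
qed

definition umat_inv :: "'a mat" where
  "umat_inv = mono_mat n (\<lambda>b. if b = n - 1 then inverse pi0 else 1) (rot_inv n)"

lemma umat_carrier [simp]: "umat n pi0 \<in> carrier_mat n n"
  unfolding umat_def by simp

lemma umat_inv_carrier [simp]: "umat_inv \<in> carrier_mat n n"
  unfolding umat_inv_def by simp

lemma umat_mult_umat_inv: "umat n pi0 * umat_inv = 1\<^sub>m n"
  unfolding umat_eq_mono_mat[OF n_pos] umat_inv_def using n_pos pi0_nonzero
  by (subst mono_mat_mult) (auto simp: rot_inv_less rot_rot_inv intro!: mono_mat_eq_one,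
      auto simp: rot_inv_def)

lemma umat_inv_mult_umat: "umat_inv * umat n pi0 = 1\<^sub>m n"
  unfolding umat_eq_mono_mat[OF n_pos] umat_inv_def using n_pos pi0_nonzero
  by (subst mono_mat_mult) (auto simp: rot_less rot_inv_rot intro!: mono_mat_eq_one,
      auto simp: rot_def)

lemma umat_GL: "umat n pi0 \<in> GL n"
  using GL_if_right_inverse[OF umat_carrier umat_inv_carrier umat_mult_umat_inv] .

lemma umat_conj_index:
  fixes X :: "'a mat"
  assumes X: "X \<in> carrier_mat n n" and ab: "a < n" "b < n"
  shows "(umat_inv * (X * umat n pi0)) $$ (a, b)
    = pi0 powi (of_bool (b = 0) - of_bool (a = 0)) * X $$ (rot n a, rot n b)"
proof -
  have inj: "inj_on (rot_inv n) {..<n}"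
    by (metis inj_on_inverseI lessThan_iff rot_rot_inv[OF n_pos])
  have "umat_inv * (X * umat n pi0) = umat_inv * X * umat n pi0"
    using X by simp
  also have "\<dots> $$ (a, b) = (umat_inv * X) $$ (a, rot n b) * (if b = 0 then pi0 else 1)"
    unfolding umat_eq_mono_mat[OF n_pos] using X ab n_pos
    by (subst mult_mono_mat_index) (auto simp: rot_less umat_inv_def)
  also have "(umat_inv * X) $$ (a, rot n b)
      = (if rot n a = n - 1 then inverse pi0 else 1) * X $$ (rot n a, rot n b)"
    unfolding umat_inv_def using X ab inj n_pos
    by (subst mono_mat_mult_index[where t = "rot n a"]) (auto simp: rot_less rot_inv_rot)
  finally show ?thesis
    using ab pi0_nonzero unfolding rot_def
    by (cases "a = 0"; cases "b = 0") (auto simp: power_int_minus field_simps)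
qed

lemma umat_conj_iwahoriJ:
  assumes A: "A \<in> J"
  shows "umat_inv * (A * umat n pi0) \<in> J"
proof (rule iwahoriJI)
  have cA: "A \<in> carrier_mat n n"
    using iwahoriJ_carrier[OF A] .
  show "umat_inv * (A * umat n pi0) \<in> carrier_mat n n"
    using cA by simp
  have "det (umat_inv * (A * umat n pi0)) = det A"
    using det_conj[OF umat_carrier umat_inv_carrier cA umat_inv_mult_umat] .
  then show "det (umat_inv * (A * umat n pi0)) \<noteq> 0" "v (det (umat_inv * (A * umat n pi0))) = 0"
    using iwahoriJ_det[OF A] by auto
  fix a b assume ab: "a < n" "b < n"
  let ?e = "of_bool (b = 0) - of_bool (a = 0) :: int"
  have "A $$ (rot n a, rot n b) \<in> pw v (of_bool (rot n b < rot n a))"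
    using iwahoriJ_pw_below_diag[OF A] rot_less[OF n_pos] ab by blast
  then have "pi0 powi ?e * A $$ (rot n a, rot n b) \<in> pw v (?e + of_bool (rot n b < rot n a))"
    by (rule pw_mult[OF power_int_pw[OF pi0_nonzero v_pi0]])
  \<comment> \<open>row \<open>0\<close> gains \<open>\<varpi>\<^sup>-\<^sup>1\<close> but comes from row \<open>n-1\<close>, below the diagonal; column \<open>0\<close> gains \<open>\<varpi>\<close>\<close>
  moreover have "of_bool (b < a) \<le> ?e + of_bool (rot n b < rot n a)"
    using ab unfolding rot_def by auto
  ultimately show "(umat_inv * (A * umat n pi0)) $$ (a, b) \<in> pw v (of_bool (b < a))"
    unfolding umat_conj_index[OF cA ab] by (rule pw_mono)
qed

lemma left_cosets_umat: "left_cosets n v (umat n pi0) = {iwahori_coset n (umat n pi0)}"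
proof
  show "left_cosets n v (umat n pi0) \<subseteq> {iwahori_coset n (umat n pi0)}"
  proof
    fix C assume "C \<in> left_cosets n v (umat n pi0)"
    then obtain a b where ab: "a \<in> J" "b \<in> J" "C = iwahori_coset n (a * umat n pi0 * b)"
      unfolding left_cosets_eq double_coset_def by blast
    have ca: "a \<in> carrier_mat n n"
      using iwahoriJ_carrier[OF ab(1)] .
    have "C = iwahori_coset n (a * umat n pi0)"
      using ab iwahori_coset_mult ca by simp
    also have "a * umat n pi0 = umat n pi0 * (umat_inv * (a * umat n pi0))"
      using mult_left_inverse_mat[OF _ _ _ umat_mult_umat_inv] ca by simp
    also have "iwahori_coset n \<dots> = iwahori_coset n (umat n pi0)"
      using iwahori_coset_mult[OF umat_carrier umat_conj_iwahoriJ[OF ab(1)]] .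
    finally show "C \<in> {iwahori_coset n (umat n pi0)}"
      by simp
  qed
  have "1\<^sub>m n * umat n pi0 * 1\<^sub>m n \<in> double_coset n v (umat n pi0)"
    unfolding double_coset_def using one_iwahoriJ by blast
  then show "{iwahori_coset n (umat n pi0)} \<subseteq> left_cosets n v (umat n pi0)"
    unfolding left_cosets_eq by simp
qed

end

definition cycle_up :: "nat \<Rightarrow> nat \<Rightarrow> nat \<Rightarrow> nat" where
  "cycle_up j m b = (if b = j + m then j else if j \<le> b \<and> b < j + m then b + 1 else b)"

definition cycle_down :: "nat \<Rightarrow> nat \<Rightarrow> nat \<Rightarrow> nat" where
  "cycle_down j m b = (if b = j - m then j else if j - m < b \<and> b \<le> j then b - 1 else b)"

lemma cycle_up_0: "cycle_up j 0 = id"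
  unfolding cycle_up_def by auto

lemma cycle_down_0: "cycle_down j 0 = id"
  unfolding cycle_down_def by auto

lemma cycle_up_Suc: "cycle_up j (Suc m) = cycle_up j m \<circ> adj_swap (j + m)"
  unfolding cycle_up_def adj_swap_def by (rule ext) auto

lemma cycle_down_Suc: "Suc m \<le> j \<Longrightarrow> cycle_down j (Suc m) = cycle_down j m \<circ> adj_swap (j - Suc m)"
  unfolding cycle_down_def adj_swap_def by (rule ext) auto

lemma bij_cycle_up: "j + m < n \<Longrightarrow> bij_betw (cycle_up j m) {..<n} {..<n}"
proof (induction m)
  case (Suc m)
  show ?case
    unfolding cycle_up_Suc by (rule bij_betw_trans[OF bij_adj_swap]) (use Suc in auto)
qed (simp add: cycle_up_0)

lemma bij_cycle_down: "m \<le> j \<Longrightarrow> j < n \<Longrightarrow> bij_betw (cycle_down j m) {..<n} {..<n}"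
proof (induction m)
  case (Suc m)
  show ?case
    unfolding cycle_down_Suc[OF Suc.prems(1)]
    by (rule bij_betw_trans[OF bij_adj_swap]) (use Suc in auto)
qed (simp add: cycle_down_0)

definition dominant :: "nat \<Rightarrow> (nat \<Rightarrow> int) \<Rightarrow> bool" where
  "dominant n \<mu> \<longleftrightarrow> (\<forall>i. i + 1 < n \<longrightarrow> \<mu> (i + 1) \<le> \<mu> i)"

lemma dominant_mono:
  assumes "dominant n \<mu>" "a \<le> b"
  shows "b < n \<Longrightarrow> \<mu> b \<le> \<mu> a"
  using assms(2)
proof (induction b rule: dec_induct)
  case (step m)
  then show ?case
    using assms(1) unfolding dominant_def by force
qed simp

lemma dominant_cong: "(\<And>i. i < n \<Longrightarrow> \<mu> i = \<mu>' i) \<Longrightarrow> dominant n \<mu> \<longleftrightarrow> dominant n \<mu>'"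
  unfolding dominant_def by auto

lemma dominant_lower:
  assumes "dominant n \<mu>" "Suc j < n" "\<mu> (Suc j) < \<mu> j"
  shows "dominant n (\<mu>(j := \<mu> j - 1))"
  unfolding dominant_def
proof (intro allI impI)
  fix i assume "i + 1 < n"
  then have "\<mu> (i + 1) \<le> \<mu> i"
    using assms(1) unfolding dominant_def by blast
  then show "(\<mu>(j := \<mu> j - 1)) (i + 1) \<le> (\<mu>(j := \<mu> j - 1)) i"
    using assms(3) by auto
qed

lemma descent_exists:
  fixes f :: "nat \<Rightarrow> int"
  shows "i < m \<Longrightarrow> f m < f i \<Longrightarrow> \<exists>j. i \<le> j \<and> j < m \<and> f (Suc j) < f j"
proof (induction m)
  case (Suc m)
  consider "i < m \<and> f m < f i" | "i = m" | "i < m \<and> f i \<le> f m"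
    using Suc.prems by linarith
  then show ?case
  proof cases
    case 1
    then show ?thesis
      using Suc.IH less_SucI by blast
  next
    case 2
    then show ?thesis
      using Suc.prems by auto
  next
    case 3
    then show ?thesis
      using Suc.prems by (intro exI[of _ m]) auto
  qed
qed simp

definition excess :: "nat \<Rightarrow> (nat \<Rightarrow> int) \<Rightarrow> nat" where
  "excess n \<mu> = (\<Sum>i<n. nat (\<mu> i - \<mu> (n - 1)))"

lemma excess_lower:
  assumes "Suc j < n" "\<mu> (n - 1) < \<mu> j"
  shows "excess n (\<mu>(j := \<mu> j - 1)) < excess n \<mu>"
  unfolding excess_def
proof (rule sum_strict_mono_ex1)
  have last: "(\<mu>(j := \<mu> j - 1)) (n - 1) = \<mu> (n - 1)"
    using assms(1) by simp
  show "\<forall>i\<in>{..<n}. nat ((\<mu>(j := \<mu> j - 1)) i - (\<mu>(j := \<mu> j - 1)) (n - 1)) \<le> nat (\<mu> i - \<mu> (n - 1))"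
    unfolding last by auto
  show "\<exists>i\<in>{..<n}. nat ((\<mu>(j := \<mu> j - 1)) i - (\<mu>(j := \<mu> j - 1)) (n - 1)) < nat (\<mu> i - \<mu> (n - 1))"
    unfolding last using assms by (intro bexI[of _ j]) auto
qed simp

definition delta_exponent :: "nat \<Rightarrow> (nat \<Rightarrow> int) \<Rightarrow> int" where
  "delta_exponent n \<mu> = (\<Sum>i<n. \<mu> i * (int n - 1 - 2 * int i))"

lemma delta_exponent_const:
  assumes "\<And>i. i < n \<Longrightarrow> \<mu> i = c"
  shows "delta_exponent n \<mu> = 0"
proof -
  have gauss: "2 * (\<Sum>i<n. int i) = int n * (int n - 1)"
    by (induction n) (auto simp: algebra_simps)
  have "(\<Sum>i<n. int n - 1 - 2 * int i) = 0"
    using gauss by (simp add: sum_subtractf sum_distrib_left)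
  then show ?thesis
    unfolding delta_exponent_def using assms by (simp add: sum_distrib_left[symmetric])
qed

lemma delta_exponent_raise:
  assumes "j < n"
  shows "delta_exponent n (\<mu>(j := \<mu> j + 1)) = delta_exponent n \<mu> + (int n - 1 - 2 * int j)"
proof -
  have "delta_exponent n (\<mu>(j := \<mu> j + 1))
      = (\<Sum>i<n. \<mu> i * (int n - 1 - 2 * int i) + (if i = j then int n - 1 - 2 * int i else 0))"
    unfolding delta_exponent_def by (intro sum.cong) (auto simp: algebra_simps)
  then show ?thesis
    using assms unfolding delta_exponent_def by (simp add: sum.distrib)
qed

lemma prod_power_int_sum: "(x::'a::field) \<noteq> 0 \<Longrightarrow> (\<Prod>i\<in>S. x powi f i) = x powi (\<Sum>i\<in>S. f i)"
  by (induction S rule: infinite_finite_induct) (auto simp: power_int_add)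

context iwahori_frame
begin

text \<open>\<open>diag_perm \<mu> \<pi>\<close> is the matrix \<open>\<varpi>\<^sup>\<mu> w\<close> of the paper: \<open>diagpw n pi0 \<mu>\<close> times the permutation
  matrix of \<open>\<pi>\<close>.\<close>

definition diag_perm :: "(nat \<Rightarrow> int) \<Rightarrow> (nat \<Rightarrow> nat) \<Rightarrow> 'a mat" where
  "diag_perm \<mu> \<pi> = mono_mat n (\<lambda>b. pi0 powi \<mu> (\<pi> b)) \<pi>"

lemma diag_perm_carrier [simp]: "diag_perm \<mu> \<pi> \<in> carrier_mat n n"
  and diag_perm_dim [simp]: "dim_row (diag_perm \<mu> \<pi>) = n" "dim_col (diag_perm \<mu> \<pi>) = n"
  unfolding diag_perm_def by simp_all

lemma diag_perm_id: "diag_perm \<mu> id = diagpw n pi0 \<mu>"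
  unfolding diag_perm_def diagpw_eq_mono_mat by simp

lemma diag_perm_GL: "bij_betw \<pi> {..<n} {..<n} \<Longrightarrow> diag_perm \<mu> \<pi> \<in> GL n"
  unfolding diag_perm_def by (rule mono_mat_GL) (auto simp: pi0_nonzero)

lemma diag_perm_mult_sperm: "Suc i < n \<Longrightarrow> diag_perm \<mu> \<pi> * sperm n i = diag_perm \<mu> (\<pi> \<circ> adj_swap i)"
  unfolding diag_perm_def sperm_eq_mono_mat by (subst mono_mat_mult) (auto simp: adj_swap_less)

lemma diag_perm_mult_umat:
  assumes bij: "bij_betw \<pi> {..<n} {..<n}"
  shows "diag_perm \<mu> \<pi> * umat n pi0 = diag_perm (\<mu>(\<pi> (n - 1) := \<mu> (\<pi> (n - 1)) + 1)) (\<pi> \<circ> rot n)"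
  unfolding diag_perm_def umat_eq_mono_mat[OF n_pos]
proof (subst mono_mat_mult)
  have inj: "inj_on \<pi> {..<n}"
    using bij bij_betw_imp_inj_on by blast
  show "mono_mat n (\<lambda>b. pi0 powi \<mu> (\<pi> (rot n b)) * (if b = 0 then pi0 else 1)) (\<pi> \<circ> rot n) =
    mono_mat n (\<lambda>b. pi0 powi (\<mu>(\<pi> (n - 1) := \<mu> (\<pi> (n - 1)) + 1)) ((\<pi> \<circ> rot n) b)) (\<pi> \<circ> rot n)"
  proof (rule mono_mat_cong)
    fix b assume b: "b < n"
    have "\<pi> (rot n b) = \<pi> (n - 1) \<longleftrightarrow> b = 0"
      using inj_on_eq_iff[OF inj, of "rot n b" "n - 1"] rot_less[OF n_pos b] n_pos b
      by (auto simp: rot_def)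
    then show "(\<pi> \<circ> rot n) b = (\<pi> \<circ> rot n) b \<and> pi0 powi \<mu> (\<pi> (rot n b)) * (if b = 0 then pi0 else 1)
      = pi0 powi (\<mu>(\<pi> (n - 1) := \<mu> (\<pi> (n - 1)) + 1)) ((\<pi> \<circ> rot n) b)"
      using pi0_nonzero by (auto simp: power_int_add)
  qed
qed (use rot_less[OF n_pos] in auto)

lemma diag_perm_mult_elem_mat:
  assumes bij: "bij_betw \<pi> {..<n} {..<n}" and i: "Suc i < n"
  shows "diag_perm \<mu> \<pi> * elem_mat n i (Suc i) r =
    elem_mat n (\<pi> i) (\<pi> (Suc i)) (r * pi0 powi (\<mu> (\<pi> i) - \<mu> (\<pi> (Suc i)))) * diag_perm \<mu> \<pi>"
    (is "?D * _ = ?E * ?D")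
proof (rule eq_matI)
  have inj: "inj_on \<pi> {..<n}"
    using bij bij_betw_imp_inj_on by blast
  have lt: "\<And>b. b < n \<Longrightarrow> \<pi> b < n"
    using bij bij_betwE by blast
  fix a b assume "a < dim_row (?E * ?D)" "b < dim_col (?E * ?D)"
  then have ab: "a < n" "b < n"
    by auto
  have "(?D * elem_mat n i (Suc i) r) $$ (a, b)
      = ?D $$ (a, b) + (if b = Suc i then ?D $$ (a, i) * r else 0)"
    using ab i by (intro mult_elem_mat_index) auto
  moreover have "(?E * ?D) $$ (a, b) = ?D $$ (a, b)
      + (if a = \<pi> i then r * pi0 powi (\<mu> (\<pi> i) - \<mu> (\<pi> (Suc i))) * ?D $$ (\<pi> (Suc i), b) else 0)"
    using ab i lt by (intro elem_mat_mult_index) auto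
  moreover have "?D $$ (\<pi> (Suc i), b) = (if b = Suc i then pi0 powi \<mu> (\<pi> (Suc i)) else 0)"
    unfolding diag_perm_def using ab i lt inj_on_eq_iff[OF inj, of "Suc i" b] by auto
  moreover have "?D $$ (a, i) = (if a = \<pi> i then pi0 powi \<mu> (\<pi> i) else 0)"
    unfolding diag_perm_def using ab i by auto
  moreover have "pi0 powi (\<mu> (\<pi> i) - \<mu> (\<pi> (Suc i))) * pi0 powi \<mu> (\<pi> (Suc i)) = pi0 powi \<mu> (\<pi> i)"
    using pi0_nonzero by (simp flip: power_int_add)
  ultimately show "(?D * elem_mat n i (Suc i) r) $$ (a, b) = (?E * ?D) $$ (a, b)"
    by (auto simp: algebra_simps)
qed auto

lemma diagpw_in_Tplus_iff: "diagpw n pi0 k \<in> Tplus n pi0 \<longleftrightarrow> dominant n k"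
proof
  assume "diagpw n pi0 k \<in> Tplus n pi0"
  then obtain k' where k': "diagpw n pi0 k = diagpw n pi0 k'" "dominant n k'"
    unfolding Tplus_def dominant_def by auto
  have "k i = k' i" if i: "i < n" for i
  proof -
    have "pi0 powi k i = pi0 powi k' i"
      using arg_cong[OF k'(1), of "\<lambda>A. A $$ (i, i)"] i unfolding diagpw_def by simp
    then have "v (pi0 powi k i) = v (pi0 powi k' i)"
      by simp
    then show ?thesis
      using v_power_int[OF pi0_nonzero] v_pi0 by simp
  qed
  then show "dominant n k"
    using k'(2) dominant_cong by blast
qed (auto simp: Tplus_def dominant_def)

lemma deltaB_diagpw: "deltaB n v (diagpw n pi0 \<mu>) = real (resq v) powi (- delta_exponent n \<mu>)"
proof -
  have "deltaB n v (diagpw n pi0 \<mu>) = (\<Prod>i<n. real (resq v) powi (- \<mu> i * (int n - 1 - 2 * int i)))"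
    unfolding deltaB_def
  proof (rule prod.cong[OF refl])
    fix i assume "i \<in> {..<n}"
    then have "absv v (diagpw n pi0 \<mu> $$ (i, i)) = real (resq v) powi (- \<mu> i)"
      unfolding absv_def diagpw_def using pi0_nonzero v_power_int[OF pi0_nonzero] v_pi0 by simp
    then show "absv v (diagpw n pi0 \<mu> $$ (i, i)) powi (int n - 1 - 2 * int i) =
        real (resq v) powi (- \<mu> i * (int n - 1 - 2 * int i))"
      by (simp only: power_int_mult)
  qed
  also have "\<dots> = real (resq v) powi (- delta_exponent n \<mu>)"
    using resq_pos unfolding delta_exponent_def by (simp add: prod_power_int_sum sum_negf)
  finally show ?thesis .
qed

end

locale iwahori_eigen_whittaker = iwahori_frame v n pi0
  for v :: "'a::field \<Rightarrow> int" and n :: nat and pi0 :: 'a +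
  fixes \<psi> :: "'a \<Rightarrow> complex" and W :: "'a mat \<Rightarrow> complex" and \<epsilon> :: complex
  assumes psi: "unram_char v \<psi>"
    and whittaker: "\<forall>u\<in>unipN n. \<forall>g\<in>GL n. W (u * g) = psiN n \<psi> u * W g"
    and W_iwahori: "fixed_by n (iwahoriJ n v) W"
    and W_one: "W (1\<^sub>m n) = 1"
    and W_centre: "\<forall>z\<in>centre n. \<forall>g\<in>GL n. W (z * g) = W g"
    and hecke_sperm_eigen: "\<forall>i. i + 1 < n \<longrightarrow> (\<forall>g\<in>GL n. hecke n v (sperm n i) W g = - W g)"
    and hecke_umat_eigen: "\<forall>g\<in>GL n. hecke n v (umat n pi0) W g = \<epsilon> * W g"
    and eps_root: "\<epsilon> ^ n = 1"
begin

abbreviation qC :: complex where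
  "qC \<equiv> of_nat (resq v)"

lemma W_mult_iwahoriJ: "g \<in> GL n \<Longrightarrow> h \<in> J \<Longrightarrow> W (g * h) = W g"
  using W_iwahori unfolding fixed_by_def by blast

lemma W_elem_mat_mult:
  assumes "p < q" "q < n" "c \<in> intO v" "g \<in> GL n"
  shows "W (elem_mat n p q c * g) = W g"
proof -
  have "W (elem_mat n p q c * g) = psiN n \<psi> (elem_mat n p q c) * W g"
    using whittaker elem_mat_unipN[OF assms(1)] assms(4) by blast
  moreover have "(\<Sum>i<n - 1. elem_mat n p q c $$ (i, i + 1)) \<in> intO v"
    using assms(3) by (intro pw_sum) auto
  ultimately show ?thesis
    using psi unfolding psiN_def unram_char_def by simp
qed

lemma hecke_sperm_eq:
  assumes i: "Suc i < n" and g: "g \<in> GL n"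
  shows "hecke n v (sperm n i) W g = (\<Sum>r\<in>residue_reps. W (g * (elem_mat n i (Suc i) r * sperm n i)))"
proof -
  have "hecke n v (sperm n i) W g = (\<Sum>r\<in>residue_reps.
      W (g * (SOME \<gamma>. \<gamma> \<in> iwahori_coset n (elem_mat n i (Suc i) r * sperm n i))))"
    unfolding hecke_def left_cosets_sperm[OF i] using sum.reindex[OF inj_on_left_cosets_sperm[OF i]]
    by simp
  also have "\<dots> = (\<Sum>r\<in>residue_reps. W (g * (elem_mat n i (Suc i) r * sperm n i)))"
  proof (rule sum.cong[OF refl])
    fix r :: 'a
    let ?X = "elem_mat n i (Suc i) r * sperm n i"
    obtain b where b: "b \<in> J" "(SOME \<gamma>. \<gamma> \<in> iwahori_coset n ?X) = ?X * b"
      using some_iwahori_coset[of ?X n] by auto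
    have "g * ?X \<in> GL n"
      using g i by (intro GL_mult elem_mat_GL sperm_GL) auto
    then have "W (g * ?X * b) = W (g * ?X)"
      using W_mult_iwahoriJ b(1) by blast
    then show "W (g * (SOME \<gamma>. \<gamma> \<in> iwahori_coset n ?X)) = W (g * ?X)"
      using b g iwahoriJ_carrier[OF b(1)] unfolding GL_def by simp
  qed
  finally show ?thesis .
qed

lemma hecke_umat_eq:
  assumes g: "g \<in> GL n"
  shows "hecke n v (umat n pi0) W g = W (g * umat n pi0)"
proof -
  obtain b where b: "b \<in> J" "(SOME \<gamma>. \<gamma> \<in> iwahori_coset n (umat n pi0)) = umat n pi0 * b"
    using some_iwahori_coset[of "umat n pi0" n] by auto
  have "W (g * umat n pi0 * b) = W (g * umat n pi0)"
    using W_mult_iwahoriJ[OF GL_mult[OF g umat_GL] b(1)] .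
  then show ?thesis
    unfolding hecke_def left_cosets_umat using b g iwahoriJ_carrier[OF b(1)] unfolding GL_def by simp
qed

text \<open>Moving \<open>x\<^sub>i(r)\<close> across \<open>\<varpi>\<^sup>\<mu> w\<close> turns it into an integral upper unipotent element, on
  which \<open>\<psi>\<close> is trivial; hence all \<open>q\<close> terms of the Hecke sum equal \<open>W(\<varpi>\<^sup>\<mu> w s\<^sub>i)\<close>.\<close>

lemma W_diag_perm_mult_sperm:
  assumes bij: "bij_betw \<pi> {..<n} {..<n}" and i: "Suc i < n"
    and lt: "\<pi> i < \<pi> (Suc i)" and le: "\<mu> (\<pi> (Suc i)) \<le> \<mu> (\<pi> i)"
  shows "qC * W (diag_perm \<mu> (\<pi> \<circ> adj_swap i)) = - W (diag_perm \<mu> \<pi>)"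
proof -
  have G: "diag_perm \<mu> \<pi> \<in> GL n"
    using diag_perm_GL[OF bij] .
  have q: "\<pi> (Suc i) < n"
    using bij i bij_betwE by blast
  have "W (diag_perm \<mu> \<pi> * (elem_mat n i (Suc i) r * sperm n i)) = W (diag_perm \<mu> \<pi> * sperm n i)"
    if r: "r \<in> residue_reps" for r
  proof -
    let ?c = "r * pi0 powi (\<mu> (\<pi> i) - \<mu> (\<pi> (Suc i)))"
    have "pi0 powi (\<mu> (\<pi> i) - \<mu> (\<pi> (Suc i))) \<in> intO v"
      using le by (intro pw_mono[OF power_int_pw[OF pi0_nonzero v_pi0]]) simp
    then have "?c \<in> intO v"
      using residue_reps_intO[OF r] pw_mult_intO by blast
    moreover have "diag_perm \<mu> \<pi> * (elem_mat n i (Suc i) r * sperm n i)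
        = elem_mat n (\<pi> i) (\<pi> (Suc i)) ?c * (diag_perm \<mu> \<pi> * sperm n i)"
      using diag_perm_mult_elem_mat[OF bij i] by (simp flip: mult_assoc_n)
    ultimately show ?thesis
      using W_elem_mat_mult[OF lt q _ GL_mult[OF G sperm_GL[OF i]]] by simp
  qed
  then have "- W (diag_perm \<mu> \<pi>) = (\<Sum>r\<in>residue_reps. W (diag_perm \<mu> \<pi> * sperm n i))"
    using hecke_sperm_eigen hecke_sperm_eq[OF i G] i G by simp
  then show ?thesis
    using card_residue_reps diag_perm_mult_sperm[OF i] by simp
qed

lemma W_diag_perm_mult_umat:
  assumes "bij_betw \<pi> {..<n} {..<n}"
  shows "W (diag_perm (\<mu>(\<pi> (n - 1) := \<mu> (\<pi> (n - 1)) + 1)) (\<pi> \<circ> rot n)) = \<epsilon> * W (diag_perm \<mu> \<pi>)"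
proof -
  have "W (diag_perm \<mu> \<pi> * umat n pi0) = \<epsilon> * W (diag_perm \<mu> \<pi>)"
    using hecke_umat_eigen hecke_umat_eq diag_perm_GL[OF assms] by simp
  then show ?thesis
    unfolding diag_perm_mult_umat[OF assms] .
qed

lemma W_cycle_up:
  assumes "dominant n \<mu>"
  shows "j + m < n \<Longrightarrow> qC ^ m * W (diag_perm \<mu> (cycle_up j m)) = (-1) ^ m * W (diag_perm \<mu> id)"
proof (induction m)
  case (Suc m)
  have "cycle_up j m (j + m) = j" "cycle_up j m (Suc (j + m)) = Suc (j + m)"
    unfolding cycle_up_def by auto
  then have step: "qC * W (diag_perm \<mu> (cycle_up j (Suc m))) = - W (diag_perm \<mu> (cycle_up j m))"
    unfolding cycle_up_Suc using Suc.prems dominant_mono[OF assms]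
    by (intro W_diag_perm_mult_sperm bij_cycle_up) auto
  have "qC ^ Suc m * W (diag_perm \<mu> (cycle_up j (Suc m)))
      = qC ^ m * (qC * W (diag_perm \<mu> (cycle_up j (Suc m))))"
    by (simp add: ac_simps)
  also have "\<dots> = - (qC ^ m * W (diag_perm \<mu> (cycle_up j m)))"
    unfolding step by simp
  finally have "qC ^ Suc m * W (diag_perm \<mu> (cycle_up j (Suc m)))
      = - (qC ^ m * W (diag_perm \<mu> (cycle_up j m)))" .
  then show ?case
    using Suc by simp
qed (simp add: cycle_up_0)

lemma W_cycle_down:
  assumes "dominant n \<mu>" and j: "j < n"
  shows "m \<le> j \<Longrightarrow> qC ^ m * W (diag_perm \<mu> (cycle_down j m)) = (-1) ^ m * W (diag_perm \<mu> id)"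
proof (induction m)
  case (Suc m)
  have "cycle_down j m (j - Suc m) = j - Suc m" "cycle_down j m (Suc (j - Suc m)) = j"
    unfolding cycle_down_def using Suc.prems by auto
  then have step: "qC * W (diag_perm \<mu> (cycle_down j (Suc m))) = - W (diag_perm \<mu> (cycle_down j m))"
    unfolding cycle_down_Suc[OF Suc.prems] using Suc.prems j dominant_mono[OF assms(1)]
    by (intro W_diag_perm_mult_sperm bij_cycle_down) auto
  have "qC ^ Suc m * W (diag_perm \<mu> (cycle_down j (Suc m)))
      = qC ^ m * (qC * W (diag_perm \<mu> (cycle_down j (Suc m))))"
    by (simp add: ac_simps)
  also have "\<dots> = - (qC ^ m * W (diag_perm \<mu> (cycle_down j m)))"
    unfolding step by simp
  finally have "qC ^ Suc m * W (diag_perm \<mu> (cycle_down j (Suc m)))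
      = - (qC ^ m * W (diag_perm \<mu> (cycle_down j m)))" .
  then show ?case
    using Suc by simp
qed (simp add: cycle_down_0)

text \<open>With \<open>w = cycle_up j (n-1-j)\<close> and \<open>w' = cycle_down j j\<close> one has
  \<open>\<varpi>\<^sup>\<mu> w u = \<varpi>\<^sup>\<mu>\<^sup>+\<^sup>e\<^sup>j w'\<close>, and both cycles are built from \<open>1\<close> by length-increasing
  adjacent transpositions, to which \<open>W_diag_perm_mult_sperm\<close> applies.\<close>

lemma W_raise:
  assumes dom: "dominant n \<mu>" and dom': "dominant n (\<mu>(j := \<mu> j + 1))" and j: "j < n"
  shows "qC ^ (n - 1 - j) * (-1) ^ j * W (diag_perm (\<mu>(j := \<mu> j + 1)) id)
       = qC ^ j * \<epsilon> * (-1) ^ (n - 1 - j) * W (diag_perm \<mu> id)"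
proof -
  let ?w = "cycle_up j (n - 1 - j)" and ?w' = "cycle_down j j"
  have "cycle_up j (n - 1 - j) (n - 1) = j"
    unfolding cycle_up_def using j by auto
  moreover have "diag_perm \<mu>' (?w \<circ> rot n) = diag_perm \<mu>' ?w'" for \<mu>'
    unfolding diag_perm_def cycle_up_def cycle_down_def rot_def using j
    by (intro mono_mat_cong) auto
  ultimately have U: "W (diag_perm (\<mu>(j := \<mu> j + 1)) ?w') = \<epsilon> * W (diag_perm \<mu> ?w)"
    using W_diag_perm_mult_umat[OF bij_cycle_up, of j "n - 1 - j" \<mu>] j by simp
  have "qC ^ (n - 1 - j) * ((-1) ^ j * W (diag_perm (\<mu>(j := \<mu> j + 1)) id))
      = qC ^ (n - 1 - j) * (qC ^ j * W (diag_perm (\<mu>(j := \<mu> j + 1)) ?w'))"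
    using W_cycle_down[OF dom' j] by simp
  also have "\<dots> = qC ^ j * \<epsilon> * (qC ^ (n - 1 - j) * W (diag_perm \<mu> ?w))"
    unfolding U by (simp add: algebra_simps)
  also have "\<dots> = qC ^ j * \<epsilon> * (-1) ^ (n - 1 - j) * W (diag_perm \<mu> id)"
    using W_cycle_up[OF dom] j by simp
  finally show ?thesis
    by (simp add: algebra_simps)
qed

definition W_formula :: "(nat \<Rightarrow> int) \<Rightarrow> complex" where
  "W_formula \<mu> = \<epsilon> powi (\<Sum>i<n. \<mu> i) * (-1) powi ((int n - 1) * (\<Sum>i<n. \<mu> i))
     * complex_of_real (deltaB n v (diagpw n pi0 \<mu>))"

lemma qC_nonzero: "qC \<noteq> 0"
  using resq_pos by simp

lemma eps_nonzero: "\<epsilon> \<noteq> 0"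
proof
  assume "\<epsilon> = 0"
  then have "\<epsilon> ^ n = 0"
    using n_pos by simp
  then show False
    using eps_root by simp
qed

lemma W_formula_eq:
  "W_formula \<mu> = \<epsilon> powi (\<Sum>i<n. \<mu> i) * (-1) powi ((int n - 1) * (\<Sum>i<n. \<mu> i))
     * qC powi (- delta_exponent n \<mu>)"
  unfolding W_formula_def deltaB_diagpw by simp

lemma W_formula_raise:
  assumes j: "j < n"
  shows "W_formula (\<mu>(j := \<mu> j + 1))
    = W_formula \<mu> * \<epsilon> * (-1) ^ (n - 1) * qC powi (2 * int j + 1 - int n)"
proof -
  let ?S = "\<Sum>i<n. \<mu> i" and ?E = "delta_exponent n \<mu>"
  have S: "(\<Sum>i<n. (\<mu>(j := \<mu> j + 1)) i) = ?S + 1"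
  proof -
    have "(\<Sum>i<n. (\<mu>(j := \<mu> j + 1)) i) = (\<Sum>i<n. \<mu> i + of_bool (i = j))"
      by (intro sum.cong) auto
    then show ?thesis
      using j by (simp add: sum.distrib)
  qed
  have "(-1::complex) powi (int n - 1) = (-1) ^ (n - 1)"
    using n_pos by (metis of_nat_1 of_nat_diff power_int_of_nat)
  then have "(-1::complex) powi ((int n - 1) * (?S + 1))
      = (-1) powi ((int n - 1) * ?S) * (-1) ^ (n - 1)"
    by (simp add: distrib_left power_int_add)
  moreover have "\<epsilon> powi (?S + 1) = \<epsilon> powi ?S * \<epsilon>"
    using eps_nonzero by (simp add: power_int_add)
  moreover have "qC powi (- ?E + (2 * int j + 1 - int n))
      = qC powi (- ?E) * qC powi (2 * int j + 1 - int n)"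
    using qC_nonzero by (rule power_int_add[OF disjI1])
  moreover have "- (?E + (int n - 1 - 2 * int j)) = - ?E + (2 * int j + 1 - int n)"
    by simp
  ultimately show ?thesis
    unfolding W_formula_eq S delta_exponent_raise[OF j] by (simp only: ac_simps)
qed

lemma W_dominant_raise:
  assumes dom: "dominant n \<mu>" and dom': "dominant n (\<mu>(j := \<mu> j + 1))" and j: "j < n"
    and IH: "W (diagpw n pi0 \<mu>) = W_formula \<mu>"
  shows "W (diagpw n pi0 (\<mu>(j := \<mu> j + 1))) = W_formula (\<mu>(j := \<mu> j + 1))"
proof -
  let ?\<mu>' = "\<mu>(j := \<mu> j + 1)"
  have "qC ^ (n - 1 - j) * qC powi (2 * int j + 1 - int n)
      = qC powi (int (n - 1 - j) + (2 * int j + 1 - int n))"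
    using qC_nonzero by (simp add: power_int_add)
  also have "int (n - 1 - j) + (2 * int j + 1 - int n) = int j"
    using j by simp
  finally have "qC ^ (n - 1 - j) * qC powi (2 * int j + 1 - int n) = qC ^ j"
    by simp
  moreover have "(-1::complex) ^ j * (-1) ^ (n - 1) = (-1) ^ (n - 1 - j)"
  proof -
    have "(-1::complex) ^ j * (-1) ^ (n - 1) = (-1) ^ (j + (n - 1))"
      by (simp only: power_add)
    also have "j + (n - 1) = (n - 1 - j) + 2 * j"
      using j by simp
    finally show ?thesis
      by (simp add: power_add power_mult)
  qed
  ultimately have "qC ^ (n - 1 - j) * (-1) ^ j * W_formula ?\<mu>'
      = qC ^ j * \<epsilon> * (-1) ^ (n - 1 - j) * W_formula \<mu>"
    unfolding W_formula_raise[OF j] by (simp add: algebra_simps)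
  moreover have "qC ^ (n - 1 - j) * (-1) ^ j * W (diagpw n pi0 ?\<mu>')
      = qC ^ j * \<epsilon> * (-1) ^ (n - 1 - j) * W_formula \<mu>"
    using W_raise[OF dom dom' j] IH unfolding diag_perm_id by simp
  moreover have "qC ^ (n - 1 - j) * (-1) ^ j \<noteq> 0"
    using qC_nonzero by simp
  ultimately show ?thesis
    by (metis mult_left_cancel)
qed

lemma W_central:
  assumes c: "\<And>i. i < n \<Longrightarrow> \<mu> i = c"
  shows "W (diagpw n pi0 \<mu>) = W_formula \<mu>"
proof -
  have "pi0 powi c \<cdot>\<^sub>m 1\<^sub>m n \<in> centre n"
    unfolding centre_def using pi0_nonzero by auto
  then have "W ((pi0 powi c \<cdot>\<^sub>m 1\<^sub>m n) * 1\<^sub>m n) = W (1\<^sub>m n)"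
    using W_centre one_GL by blast
  moreover have "diagpw n pi0 \<mu> = (pi0 powi c \<cdot>\<^sub>m 1\<^sub>m n) * 1\<^sub>m n"
    unfolding diagpw_def by (rule eq_matI) (auto simp: c)
  ultimately have W1: "W (diagpw n pi0 \<mu>) = 1"
    using W_one by simp
  have S: "(\<Sum>i<n. \<mu> i) = int n * c"
    using c by simp
  have "\<epsilon> powi (int n * c) = 1"
    by (simp add: power_int_mult eps_root)
  moreover have "(-1::complex) powi ((int n - 1) * (int n * c)) = 1"
  proof -
    have "(int n - 1) * (int n * c) = int ((n - 1) * n) * c"
      using n_pos by (simp add: of_nat_diff)
    moreover have "(-1::complex) powi (int ((n - 1) * n)) = 1"
      by simp
    ultimately show ?thesis
      by (simp only: power_int_mult) simp
  qed
  moreover have "delta_exponent n \<mu> = 0"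
    using c by (rule delta_exponent_const)
  ultimately show ?thesis
    unfolding W1 W_formula_eq S by simp
qed

lemma W_dominant: "dominant n \<mu> \<Longrightarrow> W (diagpw n pi0 \<mu>) = W_formula \<mu>"
proof (induction "excess n \<mu>" arbitrary: \<mu> rule: less_induct)
  case less
  show ?case
  proof (cases "\<forall>i<n. \<mu> i = \<mu> (n - 1)")
    case True
    then have "\<And>i. i < n \<Longrightarrow> \<mu> i = \<mu> (n - 1)"
      by blast
    then show ?thesis
      by (rule W_central)
  next
    case False
    then obtain i where i: "i < n" "\<mu> i \<noteq> \<mu> (n - 1)"
      by blast
    have "\<mu> (n - 1) \<le> \<mu> i"
      using dominant_mono[OF less.prems, of i "n - 1"] i by simp
    then have "\<mu> (n - 1) < \<mu> i"
      using i(2) by simp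
    moreover have "i < n - 1"
      using i by (cases "i = n - 1") auto
    ultimately obtain j where j: "i \<le> j" "j < n - 1" "\<mu> (Suc j) < \<mu> j"
      using descent_exists[of i "n - 1" \<mu>] by auto
    let ?\<mu>' = "\<mu>(j := \<mu> j - 1)"
    have "\<mu> (n - 1) \<le> \<mu> (Suc j)"
      using dominant_mono[OF less.prems, of "Suc j" "n - 1"] j by simp
    then have "excess n ?\<mu>' < excess n \<mu>"
      using j by (intro excess_lower) auto
    moreover have dom: "dominant n ?\<mu>'"
      using j less.prems by (intro dominant_lower) auto
    ultimately have IH: "W (diagpw n pi0 ?\<mu>') = W_formula ?\<mu>'"
      using less.hyps by blast
    have mu: "?\<mu>'(j := ?\<mu>' j + 1) = \<mu>"
      by simp
    have "j < n"
      using j by simp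
    from W_dominant_raise[OF dom _ this IH] show ?thesis
      using less.prems unfolding mu by blast
  qed
qed

lemma W_not_dominant:
  assumes i: "Suc i < n" and lt: "k i < k (Suc i)"
  shows "W (diagpw n pi0 k) = 0"
proof -
  obtain x where x: "x \<in> pw v (-1)" "\<psi> x \<noteq> 1"
    using psi unfolding unram_char_def by blast
  define r where "r = x * pi0 powi (k (Suc i) - k i)"
  have "r \<in> pw v (-1 + (k (Suc i) - k i))"
    unfolding r_def by (rule pw_mult[OF x(1) power_int_pw[OF pi0_nonzero v_pi0]])
  moreover have "0 \<le> -1 + (k (Suc i) - k i)"
    using lt by simp
  ultimately have r_int: "r \<in> intO v"
    by (rule pw_mono)
  have rx: "r * pi0 powi (k i - k (Suc i)) = x"
    unfolding r_def using pi0_nonzero by (simp add: mult.assoc flip: power_int_add)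
  have bij: "bij_betw id {..<n} {..<n}"
    by simp
  have G: "diag_perm k id \<in> GL n"
    using diag_perm_GL[OF bij] .
  have "W (diag_perm k id) = W (diag_perm k id * elem_mat n i (Suc i) r)"
    using W_mult_iwahoriJ[OF G elem_mat_iwahoriJ] i r_int by simp
  also have "\<dots> = W (elem_mat n i (Suc i) x * diag_perm k id)"
    using diag_perm_mult_elem_mat[OF bij i, of k r] rx by simp
  also have "\<dots> = \<psi> x * W (diag_perm k id)"
    using whittaker elem_mat_unipN[of i "Suc i" n x] G psiN_elem_mat[OF i, of \<psi> x] by simp
  finally have "(1 - \<psi> x) * W (diag_perm k id) = 0"
    by (simp add: algebra_simps)
  then show ?thesis
    using x(2) diag_perm_id by simp
qed

lemma W_diagpw:
  "W (diagpw n pi0 k) = (if diagpw n pi0 k \<in> Tplus n pi0 then W_formula k else 0)"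
proof (cases "dominant n k")
  case False
  then obtain i where "Suc i < n" "k i < k (Suc i)"
    unfolding dominant_def by (auto simp: not_le)
  then show ?thesis
    using W_not_dominant diagpw_in_Tplus_iff False by simp
qed (simp add: W_dominant diagpw_in_Tplus_iff)

end

theorem mainTheorem10:
  fixes n :: nat and v :: "'a::field \<Rightarrow> int" and pi0 :: 'a
    and \<psi> :: "'a \<Rightarrow> complex" and V :: "('a mat \<Rightarrow> complex) set"
    and W :: "'a mat \<Rightarrow> complex" and \<epsilon> :: complex
  assumes "n \<ge> 1"
    and "nonarch_local_field v"
    and "pi0 \<noteq> 0" and "v pi0 = 1"
    and "unram_char v \<psi>"
    and "irred_adm_whittaker_model n v \<psi> V"
    and "W \<in> V" and "fixed_by n (iwahoriJ n v) W"
    and "W (1\<^sub>m n) = 1"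
    and "\<forall>z\<in>centre n. \<forall>g\<in>GL n. W (z * g) = W g"
    and "\<forall>i. i + 1 < n \<longrightarrow> (\<forall>g\<in>GL n. hecke n v (sperm n i) W g = - W g)"
    and "\<forall>g\<in>GL n. hecke n v (umat n pi0) W g = \<epsilon> * W g"
    and "\<epsilon> ^ n = 1"
  shows "\<forall>k :: nat \<Rightarrow> int. W (diagpw n pi0 k) =
     (if diagpw n pi0 k \<in> Tplus n pi0
      then \<epsilon> powi (\<Sum>i<n. k i) * (-1) powi ((int n - 1) * (\<Sum>i<n. k i))
           * complex_of_real (deltaB n v (diagpw n pi0 k))
      else 0)"
proof -
  have "\<forall>u\<in>unipN n. \<forall>g\<in>GL n. W (u * g) = psiN n \<psi> u * W g"
    using assms(6,7) unfolding irred_adm_whittaker_model_def by blast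
  then interpret iwahori_eigen_whittaker v n pi0 \<psi> W \<epsilon>
    using assms by unfold_locales auto
  show ?thesis
    using W_diagpw unfolding W_formula_def by blast
qed

end
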